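(* Let $X_1,X_2,\dots$ be i.i.d. real-valued random variables with common distribution $F$, let $f_c:\mathbb{R}^2\to\mathbb{R}$ be Borel measurable with $f_c(x,y)=f_c(y,x)$, let $B\subset\mathbb{R}$ be a Borel set, and fix a real number $w$. For each $n$, consider the random graph on vertices $1,\dots,n$ in which $i\neq j$ are adjacent iff $f_c(X_i,X_j)\in B$. For vertex $i$, let $D_n(i)$ be its degree and $T_n(i)$ the number of triangles containing $i$, and define the local clustering coefficient $$C_n(i)=\frac{T_n(i)}{\binom{D_n(i)}{2}}I_{\{D_n(i)\ge 2\}}+w\,I_{\{D_n(i)\in\{0,1\}\}},$$ and the global clustering coefficient $C_n=\frac1n\sum_{i=1}^n C_n(i)$. Let $h_D(x,y)=I_B(f_c(x,y))$, $h_T(x,y,z)=I_B(f_c(x,y))I_B(f_c(y,z))I_B(f_c(z,x))$, $E_D(x)=\int h_D(x,y)F(dy)$, $E_T(x)=\iint h_T(x,y,z)F(dy)F(dz)$, and $$C(1)=\frac{E_T(X_1)}{E_D(X_1)^2}I_{\{E_D(X_1)>0\}}+w\,I_{\{E_D(X_1)=0\}}.$$ Then $C_n\to\mathbb{E}[C(1)]$ almost surely as $n\to\infty$.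
   Context: $I_A$ denotes the indicator function of the set $A$. *)

theory Defs
  imports "HOL-Probability.Probability"
begin

text \<open>Random geometric-type graph on vertices 1..n: i ~ j iff i \<noteq> j and fc (x i) (x j) \<in> B.
  Here x is the realisation of the sample (x i = X i \<omega>).\<close>

definition adj :: "(real \<Rightarrow> real \<Rightarrow> real) \<Rightarrow> real set \<Rightarrow> (nat \<Rightarrow> real) \<Rightarrow> nat \<Rightarrow> nat \<Rightarrow> bool" where
  "adj fc B x i j \<longleftrightarrow> i \<noteq> j \<and> fc (x i) (x j) \<in> B"

definition degree_n :: "(real \<Rightarrow> real \<Rightarrow> real) \<Rightarrow> real set \<Rightarrow> (nat \<Rightarrow> real) \<Rightarrow> nat \<Rightarrow> nat \<Rightarrow> nat" where
  "degree_n fc B x n i = card {j \<in> {1..n}. adj fc B x i j}"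

definition triangles_n :: "(real \<Rightarrow> real \<Rightarrow> real) \<Rightarrow> real set \<Rightarrow> (nat \<Rightarrow> real) \<Rightarrow> nat \<Rightarrow> nat \<Rightarrow> nat" where
  "triangles_n fc B x n i = card {(j, k). j \<in> {1..n} \<and> k \<in> {1..n} \<and> j < k \<and>
      adj fc B x i j \<and> adj fc B x i k \<and> adj fc B x j k}"

definition local_clust :: "(real \<Rightarrow> real \<Rightarrow> real) \<Rightarrow> real set \<Rightarrow> real \<Rightarrow> (nat \<Rightarrow> real) \<Rightarrow> nat \<Rightarrow> nat \<Rightarrow> real" where
  "local_clust fc B w x n i =
     real (triangles_n fc B x n i) / real (degree_n fc B x n i choose 2)
       * indicator {2..} (degree_n fc B x n i)
     + w * indicator {0, 1} (degree_n fc B x n i)"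

definition global_clust :: "(real \<Rightarrow> real \<Rightarrow> real) \<Rightarrow> real set \<Rightarrow> real \<Rightarrow> (nat \<Rightarrow> real) \<Rightarrow> nat \<Rightarrow> real" where
  "global_clust fc B w x n = (1 / real n) * (\<Sum>i = 1..n. local_clust fc B w x n i)"

definition h_D :: "(real \<Rightarrow> real \<Rightarrow> real) \<Rightarrow> real set \<Rightarrow> real \<Rightarrow> real \<Rightarrow> real" where
  "h_D fc B x y = indicator B (fc x y)"

definition h_T :: "(real \<Rightarrow> real \<Rightarrow> real) \<Rightarrow> real set \<Rightarrow> real \<Rightarrow> real \<Rightarrow> real \<Rightarrow> real" where
  "h_T fc B x y z = indicator B (fc x y) * indicator B (fc y z) * indicator B (fc z x)"

definition E_D :: "real measure \<Rightarrow> (real \<Rightarrow> real \<Rightarrow> real) \<Rightarrow> real set \<Rightarrow> real \<Rightarrow> real" where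
  "E_D F fc B x = (\<integral>y. h_D fc B x y \<partial>F)"

definition E_T :: "real measure \<Rightarrow> (real \<Rightarrow> real \<Rightarrow> real) \<Rightarrow> real set \<Rightarrow> real \<Rightarrow> real" where
  "E_T F fc B x = (\<integral>y. (\<integral>z. h_T fc B x y z \<partial>F) \<partial>F)"

definition C_lim :: "real measure \<Rightarrow> (real \<Rightarrow> real \<Rightarrow> real) \<Rightarrow> real set \<Rightarrow> real \<Rightarrow> real \<Rightarrow> real" where
  "C_lim F fc B w x =
     E_T F fc B x / (E_D F fc B x)\<^sup>2 * indicator {0<..} (E_D F fc B x)
     + w * indicator {0} (E_D F fc B x)"

end

theory Submission
  imports Defs "HOL-Probability.Probability"
begin

text \<open>Given \<open>X\<^sub>i\<close>, the degree \<open>D\<^sub>n(i)\<close> is a sum of \<open>n - 1\<close> independent indicators with mean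
  \<open>E\<^sub>D(X\<^sub>i)\<close>, and \<open>2 T\<^sub>n(i)\<close> is a sum over ordered pairs \<open>j \<noteq> k\<close> of indicators with mean
  \<open>E\<^sub>T(X\<^sub>i)\<close>, only \<open>O(n\<^sup>3)\<close> pairs of which are correlated. By Chebyshev's inequality a vertex is
  therefore deviant, i.e. \<open>D\<^sub>n(i)\<close> is not within \<open>\<delta> n\<close> of \<open>(n - 1) E\<^sub>D(X\<^sub>i)\<close> or \<open>2 T\<^sub>n(i)\<close> not
  within \<open>\<delta> n\<^sup>2\<close> of \<open>(n - 1) (n - 2) E\<^sub>T(X\<^sub>i)\<close>, with probability \<open>O(1/n)\<close>. Along the squares
  \<open>n = k\<^sup>2\<close> these bounds are summable, so by Borel--Cantelli the fraction of deviant vertices almost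
  surely tends to 0, and since \<open>D\<^sub>n(i)\<close> and \<open>T\<^sub>n(i)\<close> are monotone in \<open>n\<close> this controls all \<open>n\<close>.
  At a vertex with \<open>E\<^sub>D(X\<^sub>i) \<ge> \<epsilon>\<close> that is not deviant at the two squares around \<open>n\<close>, \<open>C\<^sub>n(i)\<close>
  is close to \<open>C(i)\<close>; vertices with \<open>0 < E\<^sub>D(X\<^sub>i) < \<epsilon>\<close> are rare by the strong law of large
  numbers, and a vertex with \<open>E\<^sub>D(X\<^sub>i) = 0\<close> is almost surely isolated, so that
  \<open>C\<^sub>n(i) = w = C(i)\<close>. Hence \<open>C\<^sub>n\<close> is asymptotically the sample mean of the \<open>C(i)\<close>, which
  converges to \<open>\<bbbE>[C(1)]\<close> by the strong law.\<close>

section \<open>Degrees and triangles\<close>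

lemma real_card_filter_eq_sum:
  assumes "finite A"
  shows "real (card {j\<in>A. P j}) = (\<Sum>j\<in>A. if P j then 1 else 0)"
  using sum.inter_filter[OF assms, of "\<lambda>_. 1 :: real" P] by simp

lemma card_pairs_less_double:
  fixes N :: "'a::linorder set"
  assumes "finite N" and sym: "\<And>j k. P j k = P k j"
  shows "2 * card {(j,k). j\<in>N \<and> k\<in>N \<and> j<k \<and> P j k} = card {(j,k). j\<in>N \<and> k\<in>N \<and> j\<noteq>k \<and> P j k}"
proof -
  define S where "S = {(j,k). j\<in>N \<and> k\<in>N \<and> j<k \<and> P j k}"
  have fin: "finite S" by (rule finite_subset[of _ "N \<times> N"]) (use assms in \<open>auto simp: S_def\<close>)
  have swap: "{(j,k). j\<in>N \<and> k\<in>N \<and> k<j \<and> P j k} = prod.swap ` S"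
    unfolding S_def using sym by (auto simp: image_iff)
  have "{(j,k). j\<in>N \<and> k\<in>N \<and> j\<noteq>k \<and> P j k} = S \<union> prod.swap ` S"
    unfolding S_def swap[unfolded S_def, symmetric] by auto
  moreover have "S \<inter> prod.swap ` S = {}" unfolding S_def by auto
  moreover have "card (prod.swap ` S) = card S" by (rule card_image) (metis inj_on_def swap_swap)
  ultimately show ?thesis
    using card_Un_disjoint[OF fin finite_imageI[OF fin]] by (simp add: S_def)
qed

lemma card_pairs_less_eq_choose_2:
  fixes N :: "'a::linorder set"
  assumes "finite N"
  shows "card {(j,k). j\<in>N \<and> k\<in>N \<and> j<k} = card N choose 2"
proof -
  have "{(j,k). j\<in>N \<and> k\<in>N \<and> j\<noteq>k \<and> True} = N \<times> N - (\<lambda>j. (j,j)) ` N" by auto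
  moreover have "card ((\<lambda>j. (j,j)) ` N) = card N" by (rule card_image) (auto simp: inj_on_def)
  moreover have "card (N \<times> N - (\<lambda>j. (j,j)) ` N) = card (N \<times> N) - card ((\<lambda>j. (j,j)) ` N)"
    by (rule card_Diff_subset) (use assms in auto)
  ultimately have "2 * card {(j,k). j\<in>N \<and> k\<in>N \<and> j<k \<and> True} = card N * card N - card N"
    using card_pairs_less_double[OF assms, of "\<lambda>_ _. True"] by (simp add: card_cartesian_product)
  then show ?thesis by (simp add: choose_two diff_mult_distrib2)
qed

lemma card_off_diagonal_Sigma:
  assumes "finite A"
  shows "card (SIGMA j:A. A - {j}) = card A * (card A - 1)"
  using assms by (simp add: card_SigmaI)

lemma real_choose_2: "2 * real (m choose 2) = real m * (real m - 1)"
proof (cases m)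
  case (Suc k)
  have "even (m * (m - 1))" by auto
  then have "real (m * (m - 1) div 2) * 2 = real (m * (m - 1))"
    by (metis dvd_mult_div_cancel mult.commute of_nat_mult of_nat_numeral)
  then show ?thesis using Suc by (simp add: choose_two of_nat_diff algebra_simps)
qed simp

lemma degree_n_eq_sum:
  "real (degree_n fc B x n i) = (\<Sum>j\<in>{1..n}-{i}. h_D fc B (x i) (x j))"
proof -
  have "{j \<in> {1..n}. adj fc B x i j} = {j \<in> {1..n}-{i}. fc (x i) (x j) \<in> B}"
    by (auto simp: adj_def)
  then have "real (degree_n fc B x n i) = (\<Sum>j\<in>{1..n}-{i}. if fc (x i) (x j) \<in> B then 1 else 0)"
    unfolding degree_n_def by (metis real_card_filter_eq_sum finite_Diff finite_atLeastAtMost)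
  also have "\<dots> = (\<Sum>j\<in>{1..n}-{i}. h_D fc B (x i) (x j))"
    by (intro sum.cong refl) (simp add: h_D_def indicator_def)
  finally show ?thesis .
qed

lemma triangles_n_eq_sum:
  assumes sym: "\<And>a b. fc a b = fc b a"
  shows "2 * real (triangles_n fc B x n i) =
     (\<Sum>(j, k)\<in>(SIGMA j:{1..n}-{i}. {1..n}-{i}-{j}). h_T fc B (x i) (x j) (x k))"
proof -
  define N where "N = {1..n} - {i}"
  define P where "P j k \<longleftrightarrow> fc (x i) (x j) \<in> B \<and> fc (x i) (x k) \<in> B \<and> fc (x j) (x k) \<in> B" for j k
  have fN: "finite N" by (simp add: N_def)
  have "{(j, k). j \<in> {1..n} \<and> k \<in> {1..n} \<and> j < k \<and> adj fc B x i j \<and> adj fc B x i k \<and> adj fc B x j k}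
      = {(j,k). j\<in>N \<and> k\<in>N \<and> j<k \<and> P j k}"
    by (auto simp: adj_def N_def P_def)
  then have "2 * triangles_n fc B x n i = card {(j,k). j\<in>N \<and> k\<in>N \<and> j\<noteq>k \<and> P j k}"
    unfolding triangles_n_def using card_pairs_less_double[OF fN, of P] sym by (auto simp: P_def)
  also have "{(j,k). j\<in>N \<and> k\<in>N \<and> j\<noteq>k \<and> P j k} = {p \<in> SIGMA j:N. N - {j}. P (fst p) (snd p)}"
    by auto
  finally have "2 * real (triangles_n fc B x n i) = real (card {p \<in> SIGMA j:N. N - {j}. P (fst p) (snd p)})"
    by (metis of_nat_mult of_nat_numeral)
  also have "\<dots> = (\<Sum>(j, k)\<in>(SIGMA j:N. N - {j}). if P j k then 1 else 0)"
    using fN by (simp add: real_card_filter_eq_sum case_prod_beta)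
  also have "\<dots> = (\<Sum>(j, k)\<in>(SIGMA j:N. N - {j}). h_T fc B (x i) (x j) (x k))"
  proof -
    have "(if P j k then 1 else 0) = h_T fc B (x i) (x j) (x k)" for j k
      by (auto simp: P_def h_T_def indicator_def sym[of "x k"])
    then show ?thesis by simp
  qed
  finally show ?thesis by (simp add: N_def Diff_insert2[symmetric] insert_commute)
qed

lemma degree_n_deviation_eq_sum:
  assumes "i \<in> {1..n}"
  shows "real (degree_n fc B x n i) - (real n - 1) * e = (\<Sum>j\<in>{1..n}-{i}. h_D fc B (x i) (x j) - e)"
  using assms by (simp add: degree_n_eq_sum sum_subtractf of_nat_diff)

lemma triangles_n_deviation_eq_sum:
  assumes "\<And>a b. fc a b = fc b a" and "i \<in> {1..n}"
  shows "2 * real (triangles_n fc B x n i) - (real n - 1) * (real n - 2) * e =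
     (\<Sum>(j, k)\<in>(SIGMA j:{1..n}-{i}. {1..n}-{i}-{j}). h_T fc B (x i) (x j) (x k) - e)"
proof -
  let ?A = "{1..n} - {i}"
  have "card (SIGMA j:?A. ?A - {j}) = (n - 1) * (n - 2)"
    using assms(2) by (simp add: card_off_diagonal_Sigma numeral_2_eq_2)
  moreover have "real ((n - 1) * (n - 2)) = (real n - 1) * (real n - 2)"
    using assms(2) by (cases "n = 1") (simp_all add: of_nat_diff)
  ultimately show ?thesis
    using triangles_n_eq_sum[of fc B x n i] assms(1)
    by (simp add: sum_subtractf case_prod_beta Diff_insert2[symmetric] insert_commute)
qed

lemma triangles_n_le_degree_choose_2:
  "triangles_n fc B x n i \<le> degree_n fc B x n i choose 2"
proof -
  define N where "N = {j \<in> {1..n}. adj fc B x i j}"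
  have fN: "finite N" by (simp add: N_def)
  have "triangles_n fc B x n i \<le> card {(j,k). j\<in>N \<and> k\<in>N \<and> j<k}"
    unfolding triangles_n_def
    by (rule card_mono) (use fN in \<open>auto simp: N_def intro: finite_subset[of _ "N \<times> N"]\<close>)
  also have "\<dots> = card N choose 2" by (rule card_pairs_less_eq_choose_2[OF fN])
  finally show ?thesis by (simp add: N_def degree_n_def)
qed

lemma degree_n_mono: "n \<le> n' \<Longrightarrow> degree_n fc B x n i \<le> degree_n fc B x n' i"
  unfolding degree_n_def by (rule card_mono) auto

lemma triangles_n_mono: "n \<le> n' \<Longrightarrow> triangles_n fc B x n i \<le> triangles_n fc B x n' i"
  unfolding triangles_n_def
  by (rule card_mono) (auto intro: finite_subset[of _ "{1..n'} \<times> {1..n'}"])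

lemma local_clust_eq_ratio:
  assumes "degree_n fc B x n i \<ge> 2"
  shows "local_clust fc B w x n i = 2 * real (triangles_n fc B x n i) /
      (real (degree_n fc B x n i) * (real (degree_n fc B x n i) - 1))"
proof -
  have eq: "real (degree_n fc B x n i choose 2) = real (degree_n fc B x n i) * (real (degree_n fc B x n i) - 1) / 2"
    using real_choose_2[of "degree_n fc B x n i"] by simp
  show ?thesis using assms unfolding local_clust_def by (simp add: indicator_def eq)
qed

lemma abs_local_clust_le: "\<bar>local_clust fc B w x n i\<bar> \<le> 1 + \<bar>w\<bar>"
proof (cases "degree_n fc B x n i \<ge> 2")
  case True
  then have lc: "local_clust fc B w x n i = real (triangles_n fc B x n i) / real (degree_n fc B x n i choose 2)"
    unfolding local_clust_def by (simp add: indicator_def)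
  have "real (triangles_n fc B x n i) \<le> real (degree_n fc B x n i choose 2)"
    using triangles_n_le_degree_choose_2 by (simp only: of_nat_le_iff)
  moreover have "real (degree_n fc B x n i choose 2) > 0" using True by simp
  ultimately have "real (triangles_n fc B x n i) / real (degree_n fc B x n i choose 2) \<le> 1"
    by simp
  then show ?thesis unfolding lc by simp
next
  case False
  then have "degree_n fc B x n i \<in> {0,1}" by auto
  then show ?thesis using False unfolding local_clust_def by (simp add: indicator_def)
qed

lemma local_clust_isolated: "degree_n fc B x n i = 0 \<Longrightarrow> local_clust fc B w x n i = w"
  unfolding local_clust_def by (simp add: indicator_def)

section \<open>Local clustering of a vertex with non-deviant degree and triangle count\<close>

lemma abs_divide_diff_le:
  fixes a b c e \<rho> :: real
  assumes c: "0 < c" and e: "0 < e" and b: "0 \<le> b" "b \<le> e"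
    and ab: "\<bar>a - b\<bar> \<le> \<rho>" and ce: "\<bar>c - e\<bar> \<le> 4 * \<rho>"
  shows "\<bar>a / c - b / e\<bar> \<le> 5 * \<rho> / c"
proof -
  have "\<bar>a / c - b / e\<bar> = \<bar>(a - b) * e + b * (e - c)\<bar> / (c * e)"
    using c e by (simp add: field_simps abs_divide abs_mult)
  also have "\<dots> \<le> (\<rho> * e + e * (4 * \<rho>)) / (c * e)"
  proof (intro divide_right_mono)
    have "\<bar>(a - b) * e\<bar> \<le> \<rho> * e" using ab e by (simp add: abs_mult mult_right_mono)
    moreover have "\<bar>b * (e - c)\<bar> \<le> e * (4 * \<rho>)"
      using b ce by (simp add: abs_mult abs_minus_commute mult_mono)
    ultimately show "\<bar>(a - b) * e + b * (e - c)\<bar> \<le> \<rho> * e + e * (4 * \<rho>)"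
      by (smt (verit) abs_triangle_ineq)
  qed (use c e in simp)
  also have "\<dots> = 5 * \<rho> / c" using c e by (simp add: field_simps)
  finally show ?thesis .
qed

text \<open>Here \<open>U = D / N\<close>, and \<open>U (U - 1 / N) = D (D - 1) / N\<^sup>2\<close> is the density of ordered pairs of
  neighbours.\<close>

lemma pair_density_close:
  fixes U N d \<epsilon> \<rho> :: real
  assumes U: "\<bar>U - d\<bar> \<le> \<rho>" and N: "0 < N" "1 / N \<le> \<rho>"
    and d: "0 < \<epsilon>" "\<epsilon> \<le> d" "d \<le> 1" and \<rho>: "\<rho> \<le> \<epsilon> / 4"
  shows "\<epsilon>\<^sup>2 / 4 \<le> U * (U - 1 / N)" and "\<bar>U * (U - 1 / N) - d\<^sup>2\<bar> \<le> 4 * \<rho>"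
proof -
  have U_lower: "3 * \<epsilon> / 4 \<le> U" and U_upper: "U \<le> 5 / 4"
    using U d \<rho> unfolding abs_le_iff by linarith+
  have "(3 * \<epsilon> / 4) * (\<epsilon> / 2) \<le> U * (U - 1 / N)"
    using U_lower N \<rho> d by (intro mult_mono) auto
  moreover have "(3 * \<epsilon> / 4) * (\<epsilon> / 2) = 3 / 8 * \<epsilon>\<^sup>2" by (simp add: power2_eq_square)
  ultimately show "\<epsilon>\<^sup>2 / 4 \<le> U * (U - 1 / N)" using zero_le_power2[of \<epsilon>] by linarith
  have "\<bar>(U - d) * (U + d)\<bar> \<le> \<rho> * (9 / 4)"
    unfolding abs_mult using U U_lower U_upper d by (intro mult_mono) (auto simp: abs_le_iff)
  moreover have "\<bar>U * (1 / N)\<bar> \<le> 5 / 4 * \<rho>"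
  proof -
    have "U * (1 / N) \<le> 5 / 4 * \<rho>" using U_upper N by (intro mult_mono) auto
    moreover have "0 \<le> U * (1 / N)" using U_lower N d by simp
    ultimately show ?thesis by simp
  qed
  moreover have "U * (U - 1 / N) - d\<^sup>2 = (U - d) * (U + d) - U * (1 / N)"
    by (simp add: algebra_simps power2_eq_square)
  ultimately show "\<bar>U * (U - 1 / N) - d\<^sup>2\<bar> \<le> 4 * \<rho>" by linarith
qed

lemma clustering_ratio_close:
  fixes D T :: nat and N d t \<epsilon> \<rho> :: real
  assumes N: "N > 0" and eps: "0 < \<epsilon>" "\<epsilon> \<le> d" "d \<le> 1" and t: "0 \<le> t" "t \<le> d\<^sup>2"
    and u: "\<bar>real D / N - d\<bar> \<le> \<rho>" and v: "\<bar>2 * real T / N\<^sup>2 - t\<bar> \<le> \<rho>"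
    and rN: "1 / N \<le> \<rho>" and rho: "\<rho> \<le> \<epsilon> / 4"
  shows "D \<ge> 2 \<and> \<bar>2 * real T / (real D * (real D - 1)) - t / d\<^sup>2\<bar> \<le> 20 * \<rho> / \<epsilon>\<^sup>2"
proof -
  define q where "q = real D / N * (real D / N - 1 / N)"
  note q = pair_density_close[OF u N rN eps rho, folded q_def]
  have "0 < \<epsilon>\<^sup>2 / 4" using eps by simp
  then have q_pos: "0 < q" using q(1) by linarith
  have DD: "real D * (real D - 1) = N\<^sup>2 * q"
    using N by (simp add: q_def field_simps power2_eq_square)
  have "\<bar>2 * real T / (real D * (real D - 1)) - t / d\<^sup>2\<bar> = \<bar>(2 * real T / N\<^sup>2) / q - t / d\<^sup>2\<bar>"
    using N by (simp add: DD)
  also have "\<dots> \<le> 5 * \<rho> / q"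
    using eps t v q(2) by (intro abs_divide_diff_le q_pos) (auto simp: abs_minus_commute)
  also have "\<dots> \<le> 5 * \<rho> / (\<epsilon>\<^sup>2 / 4)"
  proof (rule divide_left_mono[OF q(1)])
    show "0 \<le> 5 * \<rho>" using rN N by (smt (verit) divide_pos_pos)
    show "0 < q * (\<epsilon>\<^sup>2 / 4)" using q_pos eps by simp
  qed
  finally have close: "\<bar>2 * real T / (real D * (real D - 1)) - t / d\<^sup>2\<bar> \<le> 20 * \<rho> / \<epsilon>\<^sup>2" by simp
  have "D \<ge> 2"
  proof (rule ccontr)
    assume "\<not> D \<ge> 2"
    then have "D = 0 \<or> D = 1" by auto
    then show False using DD N q_pos by auto
  qed
  with close show ?thesis by simp
qed


lemma abs_diff_le_of_bracket:
  fixes xa x xb ya y yb e s :: real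
  assumes "xa \<le> x" "x \<le> xb" "\<bar>xa - ya\<bar> < e" "\<bar>xb - yb\<bar> < e" "y - s \<le> ya" "yb \<le> y + s"
  shows "\<bar>x - y\<bar> \<le> e + s"
  using assms unfolding abs_less_iff abs_le_iff by linarith

lemma mult_le_if_le_and_unit_interval:
  fixes c E t :: real
  assumes "c \<le> E" "0 \<le> E" "0 \<le> t" "t \<le> 1"
  shows "c * t \<le> E"
proof (cases "0 \<le> c")
  case True
  then have "c * t \<le> c * 1" using assms by (intro mult_left_mono) auto
  then show ?thesis using assms by simp
next
  case False
  then have "c * t \<le> 0" using assms by (simp add: mult_nonpos_nonneg)
  then show ?thesis using assms by linarith
qed

lemma consecutive_squares:
  fixes M :: real
  assumes "1 \<le> M"
  shows "(M + 1)\<^sup>2 = M\<^sup>2 + 2 * M + 1" and "(M + 1)\<^sup>2 \<le> 4 * M\<^sup>2" and "M \<le> M\<^sup>2"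
proof -
  show "(M + 1)\<^sup>2 = M\<^sup>2 + 2 * M + 1" by (simp add: power2_eq_square algebra_simps)
  show "M \<le> M\<^sup>2" using assms by (simp add: power2_eq_square)
  then show "(M + 1)\<^sup>2 \<le> 4 * M\<^sup>2" using assms \<open>(M + 1)\<^sup>2 = M\<^sup>2 + 2 * M + 1\<close> by linarith
qed

text \<open>The degree and triangle counts at \<open>N\<close> are squeezed between their values at the consecutive squares
  \<open>M\<^sup>2 \<le> N < (M + 1)\<^sup>2\<close>, where they are close to their conditional means.\<close>

lemma degree_ratio_between_squares:
  fixes Da Dn Db N M d \<delta> :: real
  assumes M: "M \<ge> 1" and N: "M\<^sup>2 \<le> N" "N \<le> (M+1)\<^sup>2 - 1"
    and d: "0 \<le> d" "d \<le> 1" and \<delta>: "\<delta> \<ge> 0"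
    and mono: "Da \<le> Dn" "Dn \<le> Db"
    and ga: "\<bar>Da - (M\<^sup>2 - 1) * d\<bar> < \<delta> * M\<^sup>2"
    and gb: "\<bar>Db - ((M+1)\<^sup>2 - 1) * d\<bar> < \<delta> * (M+1)\<^sup>2"
  shows "\<bar>Dn / N - d\<bar> \<le> 4 * \<delta> + 3 / M"
proof -
  note sq = consecutive_squares[OF M]
  have N_pos: "0 < N" using N sq(3) M by linarith
  have "\<bar>Dn - N * d\<bar> \<le> \<delta> * (M+1)\<^sup>2 + (2 * M + 1)"
  proof (rule abs_diff_le_of_bracket[OF mono _ gb])
    show "\<bar>Da - (M\<^sup>2 - 1) * d\<bar> < \<delta> * (M+1)\<^sup>2"
      using ga mult_left_mono[OF _ \<delta>, of "M\<^sup>2" "(M+1)\<^sup>2"] sq(1) M by linarith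
    have "(N - (M\<^sup>2 - 1)) * d \<le> 2 * M + 1"
      using N sq M d by (intro mult_le_if_le_and_unit_interval) auto
    then show "N * d - (2 * M + 1) \<le> (M\<^sup>2 - 1) * d" by (simp add: algebra_simps)
    have "((M+1)\<^sup>2 - 1 - N) * d \<le> 2 * M + 1"
      using N sq M d by (intro mult_le_if_le_and_unit_interval) auto
    then show "((M+1)\<^sup>2 - 1) * d \<le> N * d + (2 * M + 1)" by (simp add: algebra_simps)
  qed
  also have "\<dots> \<le> 4 * \<delta> * N + 3 * M"
    using mult_left_mono[OF sq(2) \<delta>] mult_left_mono[OF N(1) \<delta>] M by linarith
  finally have "\<bar>Dn / N - d\<bar> \<le> (4 * \<delta> * N + 3 * M) / N"
    using N_pos by (simp add: field_simps abs_divide)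
  also have "\<dots> = 4 * \<delta> + 3 * M / N" using N_pos by (simp add: field_simps)
  also have "3 * M / N \<le> 3 * M / M\<^sup>2" using N M N_pos by (intro divide_left_mono mult_pos_pos) auto
  also have "3 * M / M\<^sup>2 = 3 / M" using M by (simp add: power2_eq_square)
  finally show ?thesis by simp
qed

lemma triangle_ratio_between_squares:
  fixes Ta Tn Tb N M t \<delta> :: real
  assumes M: "M \<ge> 1" and N: "M\<^sup>2 \<le> N" "N \<le> (M+1)\<^sup>2 - 1"
    and t: "0 \<le> t" "t \<le> 1" and \<delta>: "\<delta> \<ge> 0"
    and mono: "Ta \<le> Tn" "Tn \<le> Tb"
    and ga: "\<bar>2 * Ta - (M\<^sup>2 - 1) * (M\<^sup>2 - 2) * t\<bar> < \<delta> * (M\<^sup>2)\<^sup>2"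
    and gb: "\<bar>2 * Tb - ((M+1)\<^sup>2 - 1) * ((M+1)\<^sup>2 - 2) * t\<bar> < \<delta> * ((M+1)\<^sup>2)\<^sup>2"
  shows "\<bar>2 * Tn / N\<^sup>2 - t\<bar> \<le> 16 * \<delta> + 18 / M"
proof -
  note sq = consecutive_squares[OF M]
  define A where "A = M\<^sup>2"
  define E where "E = ((M+1)\<^sup>2)\<^sup>2 - (A - 1) * (A - 2)"
  have A1: "1 \<le> A" using sq(3) M by (simp add: A_def)
  have N_pos: "0 < N" using N A1 by (simp add: A_def)
  have A_N: "A\<^sup>2 \<le> N\<^sup>2" using N A1 by (intro power_mono) (auto simp: A_def)
  have N_B: "N\<^sup>2 \<le> ((M+1)\<^sup>2)\<^sup>2" using N N_pos by (intro power_mono) auto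
  have prod_le_square: "(C - 1) * (C - 2) \<le> C\<^sup>2" if "1 \<le> C" for C :: real
    using that by (simp add: power2_eq_square algebra_simps)
  have A_prod: "(A - 1) * (A - 2) \<le> A\<^sup>2" using A1 by (rule prod_le_square)
  have B_prod: "((M+1)\<^sup>2 - 1) * ((M+1)\<^sup>2 - 2) \<le> ((M+1)\<^sup>2)\<^sup>2"
    using sq A1 M by (intro prod_le_square) (simp add: A_def)
  have E_nonneg: "0 \<le> E" using A_prod A_N N_B by (simp add: E_def)
  have E_le: "E \<le> 18 * M ^ 3"
  proof -
    have "E = 4 * M ^ 3 + 9 * M\<^sup>2 + 4 * M - 1"
      by (simp add: E_def A_def power2_eq_square power3_eq_cube algebra_simps)
    moreover have "M\<^sup>2 \<le> M ^ 3"
      using M mult_right_mono[OF sq(3), of M] by (simp add: power2_eq_square power3_eq_cube)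
    ultimately show ?thesis using M sq(3) by linarith
  qed
  have "\<bar>2 * Tn - N\<^sup>2 * t\<bar> \<le> \<delta> * ((M+1)\<^sup>2)\<^sup>2 + E"
  proof (rule abs_diff_le_of_bracket[of "2 * Ta" _ "2 * Tb", OF _ _ _ gb])
    show "2 * Ta \<le> 2 * Tn" "2 * Tn \<le> 2 * Tb" using mono by simp_all
    have "(M\<^sup>2)\<^sup>2 \<le> ((M+1)\<^sup>2)\<^sup>2" using N_B A_N by (simp add: A_def)
    then show "\<bar>2 * Ta - (M\<^sup>2 - 1) * (M\<^sup>2 - 2) * t\<bar> < \<delta> * ((M+1)\<^sup>2)\<^sup>2"
      using ga mult_left_mono[OF _ \<delta>] by (smt (verit))
    have "(N\<^sup>2 - (A - 1) * (A - 2)) * t \<le> E"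
      using N_B E_nonneg t by (intro mult_le_if_le_and_unit_interval) (auto simp: E_def)
    then show "N\<^sup>2 * t - E \<le> (M\<^sup>2 - 1) * (M\<^sup>2 - 2) * t" by (simp add: A_def algebra_simps)
    have "(((M+1)\<^sup>2 - 1) * ((M+1)\<^sup>2 - 2) - N\<^sup>2) * t \<le> E"
      using B_prod A_prod A_N E_nonneg t by (intro mult_le_if_le_and_unit_interval) (auto simp: E_def)
    then show "((M+1)\<^sup>2 - 1) * ((M+1)\<^sup>2 - 2) * t \<le> N\<^sup>2 * t + E" by (simp add: algebra_simps)
  qed
  also have "\<dots> \<le> 16 * \<delta> * N\<^sup>2 + 18 * M ^ 3"
  proof -
    have "((M+1)\<^sup>2)\<^sup>2 \<le> (4 * N)\<^sup>2" using sq(2) N by (intro power_mono) auto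
    then have "\<delta> * ((M+1)\<^sup>2)\<^sup>2 \<le> \<delta> * (16 * N\<^sup>2)" using \<delta> by (intro mult_left_mono) auto
    then show ?thesis using E_le by simp
  qed
  finally have "\<bar>2 * Tn / N\<^sup>2 - t\<bar> \<le> (16 * \<delta> * N\<^sup>2 + 18 * M ^ 3) / N\<^sup>2"
    using N_pos by (simp add: field_simps abs_divide)
  also have "\<dots> = 16 * \<delta> + 18 * M ^ 3 / N\<^sup>2" using N_pos by (simp add: field_simps)
  also have "18 * M ^ 3 / N\<^sup>2 \<le> 18 * M ^ 3 / A\<^sup>2" using A_N A1 M N_pos by (intro divide_left_mono mult_pos_pos) auto
  also have "18 * M ^ 3 / A\<^sup>2 = 18 / M" using M by (simp add: A_def field_simps power2_eq_square power3_eq_cube)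
  finally show ?thesis by simp
qed

text \<open>\<open>(n - 1) d i\<close> and \<open>(n - 1) (n - 2) t i\<close> are the conditional means of \<open>D n i\<close> and
  \<open>2 T n i\<close> given the \<open>i\<close>-th sample point.\<close>

definition deviant :: "(nat \<Rightarrow> nat \<Rightarrow> nat) \<Rightarrow> (nat \<Rightarrow> nat \<Rightarrow> nat) \<Rightarrow> (nat \<Rightarrow> real) \<Rightarrow> (nat \<Rightarrow> real) \<Rightarrow> real \<Rightarrow> nat \<Rightarrow> nat \<Rightarrow> bool" where
  "deviant D T d t \<delta> n i \<longleftrightarrow> \<bar>real (D n i) - (real n - 1) * d i\<bar> \<ge> \<delta> * real n \<or>
      \<bar>2 * real (T n i) - (real n - 1) * (real n - 2) * t i\<bar> \<ge> \<delta> * real n ^ 2"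

lemma deviant_antimono:
  assumes "deviant D T d t \<delta> n i" and "\<delta>' \<le> \<delta>"
  shows "deviant D T d t \<delta>' n i"
proof -
  have "\<delta>' * real n \<le> \<delta> * real n" and "\<delta>' * real n ^ 2 \<le> \<delta> * real n ^ 2"
    using assms(2) by (simp_all add: mult_right_mono)
  then show ?thesis using assms(1) unfolding deviant_def by linarith
qed

lemma ex_squares_around: "\<exists>m. m\<^sup>2 \<le> n \<and> n < (Suc m)\<^sup>2"
proof (induction n)
  case (Suc n)
  then obtain m where m: "m\<^sup>2 \<le> n" "n < (Suc m)\<^sup>2" by auto
  show ?case
  proof (cases "Suc n < (Suc m)\<^sup>2")
    case False
    then have "Suc n = (Suc m)\<^sup>2" using m by simp
    moreover have "(Suc m)\<^sup>2 < (Suc (Suc m))\<^sup>2" by (simp add: power2_eq_square)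
    ultimately show ?thesis by (intro exI[of _ "Suc m"]) auto
  qed (use m in \<open>auto intro: exI[of _ m]\<close>)
qed simp

lemma non_deviant_ratio_close:
  fixes D T :: "nat \<Rightarrow> nat \<Rightarrow> nat" and d t :: "nat \<Rightarrow> real"
  assumes m: "m \<ge> 1" and n: "m\<^sup>2 \<le> n" "n < (Suc m)\<^sup>2"
    and D_mono: "\<And>n n'. n \<le> n' \<Longrightarrow> D n i \<le> D n' i"
    and T_mono: "\<And>n n'. n \<le> n' \<Longrightarrow> T n i \<le> T n' i"
    and dt: "d i \<le> 1" "0 \<le> t i" "t i \<le> (d i)\<^sup>2"
    and \<epsilon>: "0 < \<epsilon>" "\<epsilon> \<le> d i"
    and \<delta>: "0 \<le> \<delta>" "16 * \<delta> + 18 / real m \<le> \<rho>" and \<rho>: "\<rho> \<le> \<epsilon> / 4"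
    and good: "\<not> deviant D T d t \<delta> (m\<^sup>2) i" "\<not> deviant D T d t \<delta> ((Suc m)\<^sup>2) i"
  shows "D n i \<ge> 2 \<and>
    \<bar>2 * real (T n i) / (real (D n i) * (real (D n i) - 1)) - t i / (d i)\<^sup>2\<bar> \<le> 20 * \<rho> / \<epsilon>\<^sup>2"
proof -
  define M where "M = real m"
  have M1: "M \<ge> 1" using m by (simp add: M_def)
  have N1: "M\<^sup>2 \<le> real n" using n by (simp add: M_def flip: of_nat_power)
  have N2: "real n \<le> (M+1)\<^sup>2 - 1"
  proof -
    have "n + 1 \<le> (Suc m)\<^sup>2" using n by simp
    then have "real n + 1 \<le> real ((Suc m)\<^sup>2)" by (metis of_nat_1 of_nat_add of_nat_le_iff)
    then show ?thesis by (simp add: M_def add.commute)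
  qed
  have d0: "0 \<le> d i" using \<epsilon> by simp
  have t1: "t i \<le> 1" using dt d0 power_le_one[of "d i" 2] by linarith
  have ra: "real (m\<^sup>2) = M\<^sup>2" and rb: "real ((Suc m)\<^sup>2) = (M+1)\<^sup>2" by (simp_all add: M_def)
  have D: "\<bar>real (D n i) / real n - d i\<bar> \<le> 4 * \<delta> + 3 / M"
  proof (rule degree_ratio_between_squares[OF M1 N1 N2 d0 dt(1) \<delta>(1)])
    show "real (D (m\<^sup>2) i) \<le> real (D n i)" and "real (D n i) \<le> real (D ((Suc m)\<^sup>2) i)"
      using D_mono n by simp_all
    show "\<bar>real (D (m\<^sup>2) i) - (M\<^sup>2 - 1) * d i\<bar> < \<delta> * M\<^sup>2"
      and "\<bar>real (D ((Suc m)\<^sup>2) i) - ((M + 1)\<^sup>2 - 1) * d i\<bar> < \<delta> * (M + 1)\<^sup>2"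
      using good unfolding deviant_def ra rb by simp_all
  qed
  have T: "\<bar>2 * real (T n i) / (real n)\<^sup>2 - t i\<bar> \<le> 16 * \<delta> + 18 / M"
  proof (rule triangle_ratio_between_squares[OF M1 N1 N2 dt(2) t1 \<delta>(1)])
    show "real (T (m\<^sup>2) i) \<le> real (T n i)" and "real (T n i) \<le> real (T ((Suc m)\<^sup>2) i)"
      using T_mono n by simp_all
    show "\<bar>2 * real (T (m\<^sup>2) i) - (M\<^sup>2 - 1) * (M\<^sup>2 - 2) * t i\<bar> < \<delta> * (M\<^sup>2)\<^sup>2"
      and "\<bar>2 * real (T ((Suc m)\<^sup>2) i) - ((M + 1)\<^sup>2 - 1) * ((M + 1)\<^sup>2 - 2) * t i\<bar> < \<delta> * ((M + 1)\<^sup>2)\<^sup>2"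
      using good unfolding deviant_def ra rb by simp_all
  qed
  have \<rho>M: "1 / M \<le> \<rho>" "4 * \<delta> + 3 / M \<le> \<rho>"
  proof -
    have "0 \<le> 1 / M" "3 / M = 3 * (1 / M)" "18 / M = 18 * (1 / M)" using M1 by simp_all
    then show "1 / M \<le> \<rho>" "4 * \<delta> + 3 / M \<le> \<rho>" using \<delta> unfolding M_def by linarith+
  qed
  have nM: "1 / real n \<le> 1 / M"
  proof -
    have "M \<le> M\<^sup>2" using M1 by (simp add: power2_eq_square)
    then show ?thesis using M1 N1 by (intro divide_left_mono) auto
  qed
  have "real n > 0" using N1 M1 by (smt (verit) one_le_power)
  then show ?thesis
    by (rule clustering_ratio_close[OF _ \<epsilon> dt(1,2,3) _ _ _ \<rho>]) (use D T \<rho>M nM \<delta>[folded M_def] in linarith)+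
qed

section \<open>Convergence of the average local clustering coefficient\<close>

lemma square_bracket_bounds:
  assumes "1 \<le> m" "m\<^sup>2 \<le> n"
  shows "real m * real m \<le> real n" and "real (m\<^sup>2) + real ((Suc m)\<^sup>2) \<le> 5 * real n"
proof -
  show "real m * real m \<le> real n" using assms(2) by (metis of_nat_le_iff of_nat_mult power2_eq_square)
  have "(Suc m)\<^sup>2 \<le> 4 * m\<^sup>2" by (simp add: power2_eq_square) (use assms(1) le_square[of m] in linarith)
  then show "real (m\<^sup>2) + real ((Suc m)\<^sup>2) \<le> 5 * real n" using assms(2) by linarith
qed

text \<open>A fixed realisation of the sample: \<open>D n i\<close> and \<open>T n i\<close> are the degree and the triangle count of
  vertex \<open>i\<close> in the graph on \<open>{1..n}\<close>, \<open>C n i\<close> its local clustering coefficient, and \<open>d i\<close>,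
  \<open>t i\<close>, \<open>c i\<close> are \<open>E\<^sub>D\<close>, \<open>E\<^sub>T\<close> and \<open>C\<close> at the \<open>i\<close>-th sample point.\<close>

locale clustering_sequence =
  fixes D T :: "nat \<Rightarrow> nat \<Rightarrow> nat" and C :: "nat \<Rightarrow> nat \<Rightarrow> real"
    and d t c :: "nat \<Rightarrow> real" and K :: real
  assumes D_mono: "\<And>n n' i. n \<le> n' \<Longrightarrow> D n i \<le> D n' i"
    and T_mono: "\<And>n n' i. n \<le> n' \<Longrightarrow> T n i \<le> T n' i"
    and d_nonneg: "\<And>i. 0 \<le> d i" and d_le_1: "\<And>i. d i \<le> 1"
    and t_nonneg: "\<And>i. 0 \<le> t i" and t_le_d_square: "\<And>i. t i \<le> (d i)\<^sup>2"
    and C_eq_ratio: "\<And>n i. i \<in> {1..n} \<Longrightarrow> D n i \<ge> 2 \<Longrightarrow>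
      C n i = 2 * real (T n i) / (real (D n i) * (real (D n i) - 1))"
    and c_eq_ratio: "\<And>i. 0 < d i \<Longrightarrow> c i = t i / (d i)\<^sup>2"
    and C_eq_c_if_d_zero: "\<And>n i. i \<in> {1..n} \<Longrightarrow> d i = 0 \<Longrightarrow> C n i = c i"
    and K_pos: "0 < K"
    and abs_C_diff_le: "\<And>n i. i \<in> {1..n} \<Longrightarrow> \<bar>C n i - c i\<bar> \<le> K"
begin

lemma sum_abs_C_diff_le:
  assumes \<epsilon>: "0 < \<epsilon>" and \<delta>: "0 \<le> \<delta>" "16 * \<delta> + 18 / real m \<le> \<rho>" and \<rho>: "\<rho> \<le> \<epsilon> / 4"
    and m: "m \<ge> 1" and n: "m\<^sup>2 \<le> n" "n < (Suc m)\<^sup>2"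
  shows "(\<Sum>i\<in>{1..n}. \<bar>C n i - c i\<bar>) \<le>
    K * (real (card {i\<in>{1..n}. 0 < d i \<and> d i < \<epsilon>}) + 2 * real m
      + (real (card {i\<in>{1..m\<^sup>2}. deviant D T d t \<delta> (m\<^sup>2) i})
         + real (card {i\<in>{1..(Suc m)\<^sup>2}. deviant D T d t \<delta> ((Suc m)\<^sup>2) i})))
    + real n * (20 * \<rho> / \<epsilon>\<^sup>2)"
proof -
  let ?a = "m\<^sup>2" and ?b = "(Suc m)\<^sup>2"
  let ?small = "{i\<in>{1..n}. 0 < d i \<and> d i < \<epsilon>}"
  let ?deviant_a = "{i\<in>{1..?a}. deviant D T d t \<delta> ?a i}"
  let ?deviant_b = "{i\<in>{1..?b}. deviant D T d t \<delta> ?b i}"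
  \<comment> \<open>the vertices whose error is only bounded by \<open>K\<close>\<close>
  define P where "P i \<longleftrightarrow> (0 < d i \<and> d i < \<epsilon>) \<or> ?a < i \<or> deviant D T d t \<delta> ?a i \<or> deviant D T d t \<delta> ?b i"
    for i
  have "0 < 18 / real m" using m by simp
  then have "0 \<le> \<rho>" using \<delta> by linarith
  then have err_nonneg: "0 \<le> 20 * \<rho> / \<epsilon>\<^sup>2" by simp
  have pointwise: "\<bar>C n i - c i\<bar> \<le> K * (if P i then 1 else 0) + 20 * \<rho> / \<epsilon>\<^sup>2" if i: "i \<in> {1..n}" for i
  proof (cases "P i \<or> d i = 0")
    case True
    then show ?thesis using abs_C_diff_le[OF i] C_eq_c_if_d_zero[OF i] err_nonneg by auto
  next
    case False
    then have "0 < d i" "\<epsilon> \<le> d i" using d_nonneg[of i] by (auto simp: P_def not_less)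
    moreover have "D n i \<ge> 2 \<and>
        \<bar>2 * real (T n i) / (real (D n i) * (real (D n i) - 1)) - t i / (d i)\<^sup>2\<bar> \<le> 20 * \<rho> / \<epsilon>\<^sup>2"
      by (rule non_deviant_ratio_close[where i=i, OF m n D_mono T_mono d_le_1 t_nonneg t_le_d_square \<epsilon> _ \<delta> \<rho>])
        (use False \<open>\<epsilon> \<le> d i\<close> in \<open>auto simp: P_def\<close>)
    ultimately show ?thesis using False C_eq_ratio[OF i] c_eq_ratio by auto
  qed
  have "(\<Sum>i\<in>{1..n}. \<bar>C n i - c i\<bar>) \<le> (\<Sum>i\<in>{1..n}. K * (if P i then 1 else 0) + 20 * \<rho> / \<epsilon>\<^sup>2)"
    by (intro sum_mono pointwise)
  also have "\<dots> = K * (\<Sum>i\<in>{1..n}. if P i then 1 else 0) + real n * (20 * \<rho> / \<epsilon>\<^sup>2)"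
    by (simp add: sum.distrib sum_distrib_left[symmetric])
  also have "(\<Sum>i\<in>{1..n}. if P i then 1 else 0) = real (card {i\<in>{1..n}. P i})"
    by (rule real_card_filter_eq_sum[symmetric]) simp
  also have "card {i\<in>{1..n}. P i} \<le> card ?small + 2 * m + card ?deviant_a + card ?deviant_b"
  proof -
    have "{i\<in>{1..n}. P i} \<subseteq> ?small \<union> {?a<..n} \<union> ?deviant_a \<union> ?deviant_b"
      using n by (auto simp: P_def not_less)
    then have "card {i\<in>{1..n}. P i} \<le> card (?small \<union> {?a<..n} \<union> ?deviant_a \<union> ?deviant_b)"
      by (intro card_mono) auto
    also have "\<dots> \<le> card (?small \<union> {?a<..n} \<union> ?deviant_a) + card ?deviant_b" by (rule card_Un_le)
    also have "card (?small \<union> {?a<..n} \<union> ?deviant_a) \<le> card (?small \<union> {?a<..n}) + card ?deviant_a" by (rule card_Un_le)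
    also have "card (?small \<union> {?a<..n}) \<le> card ?small + card {?a<..n}" by (rule card_Un_le)
    also have "card {?a<..n} \<le> 2 * m" using n by (simp add: power2_eq_square)
    finally show ?thesis by simp
  qed
  then have "K * real (card {i\<in>{1..n}. P i})
      \<le> K * (real (card ?small) + 2 * real m + (real (card ?deviant_a) + real (card ?deviant_b)))"
    using K_pos by (intro mult_left_mono) (auto simp flip: of_nat_add of_nat_mult)
  finally show ?thesis by simp
qed

lemma eventually_sum_abs_C_diff_le:
  assumes few_small: "\<And>\<gamma>. 0 < \<gamma> \<Longrightarrow>
      \<exists>\<epsilon>>0. eventually (\<lambda>n. real (card {i\<in>{1..n}. 0 < d i \<and> d i < \<epsilon>}) < \<gamma> * real n) sequentially"
    and few_deviant: "\<And>\<delta> \<eta>. 0 < \<delta> \<Longrightarrow> 0 < \<eta> \<Longrightarrow>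
      eventually (\<lambda>k. real (card {i\<in>{1..k\<^sup>2}. deviant D T d t \<delta> (k\<^sup>2) i}) < \<eta> * real (k\<^sup>2)) sequentially"
    and \<gamma>: "0 < \<gamma>"
  shows "eventually (\<lambda>n. (\<Sum>i\<in>{1..n}. \<bar>C n i - c i\<bar>) \<le> \<gamma> * real n) sequentially"
proof -
  obtain \<epsilon> where \<epsilon>: "0 < \<epsilon>"
    and "eventually (\<lambda>n. real (card {i\<in>{1..n}. 0 < d i \<and> d i < \<epsilon>}) < \<gamma> / (4 * K) * real n) sequentially"
    using few_small[of "\<gamma> / (4 * K)"] \<gamma> K_pos by auto
  then obtain n0 where n0: "\<And>n. n \<ge> n0 \<Longrightarrow> real (card {i\<in>{1..n}. 0 < d i \<and> d i < \<epsilon>}) < \<gamma> / (4 * K) * real n"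
    by (auto simp: eventually_sequentially)
  define \<rho> where "\<rho> = min (\<epsilon> / 4) (\<gamma> * \<epsilon>\<^sup>2 / 80)"
  have \<rho>: "0 < \<rho>" "\<rho> \<le> \<epsilon> / 4" "20 * \<rho> / \<epsilon>\<^sup>2 \<le> \<gamma> / 4"
  proof -
    show "0 < \<rho>" "\<rho> \<le> \<epsilon> / 4" using \<epsilon> \<gamma> by (simp_all add: \<rho>_def)
    have "20 * \<rho> / \<epsilon>\<^sup>2 \<le> 20 * (\<gamma> * \<epsilon>\<^sup>2 / 80) / \<epsilon>\<^sup>2"
      by (intro divide_right_mono mult_left_mono) (simp_all add: \<rho>_def)
    then show "20 * \<rho> / \<epsilon>\<^sup>2 \<le> \<gamma> / 4" using \<epsilon> by simp
  qed
  define \<delta> where "\<delta> = \<rho> / 32"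
  define \<eta> where "\<eta> = \<gamma> / (20 * K)"
  obtain k0 where k0: "\<And>k. k \<ge> k0 \<Longrightarrow> real (card {i\<in>{1..k\<^sup>2}. deviant D T d t \<delta> (k\<^sup>2) i}) < \<eta> * real (k\<^sup>2)"
    using few_deviant[of \<delta> \<eta>] \<rho> \<gamma> K_pos by (auto simp: \<delta>_def \<eta>_def eventually_sequentially)
  obtain m0 :: nat where m0: "max (36 / \<rho>) (8 * K / \<gamma>) \<le> real m0" using real_arch_simple by blast
  define m1 where "m1 = max (max k0 m0) 1"
  show ?thesis unfolding eventually_sequentially
  proof (intro exI[of _ "max n0 (m1\<^sup>2)"] allI impI)
    fix n assume n_ge: "max n0 (m1\<^sup>2) \<le> n"
    obtain m where n: "m\<^sup>2 \<le> n" "n < (Suc m)\<^sup>2" using ex_squares_around by blast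
    have "m1\<^sup>2 < (Suc m)\<^sup>2" using n n_ge by simp
    then have "m1 < Suc m" by (rule power_less_imp_less_base) simp
    then have m: "m \<ge> 1" "k0 \<le> m" "36 / \<rho> \<le> real m" "8 * K / \<gamma> \<le> real m"
      using m0 by (auto simp: m1_def)
    have "18 / real m \<le> \<rho> / 2" using m(1,3) \<rho>(1) by (simp add: field_simps)
    then have "16 * \<delta> + 18 / real m \<le> \<rho>" by (simp add: \<delta>_def)
    from sum_abs_C_diff_le[OF \<epsilon> _ this \<rho>(2) m(1) n] \<rho>(1)
    have "(\<Sum>i\<in>{1..n}. \<bar>C n i - c i\<bar>) \<le>
      K * (real (card {i\<in>{1..n}. 0 < d i \<and> d i < \<epsilon>}) + 2 * real m
        + (real (card {i\<in>{1..m\<^sup>2}. deviant D T d t \<delta> (m\<^sup>2) i})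
           + real (card {i\<in>{1..(Suc m)\<^sup>2}. deviant D T d t \<delta> ((Suc m)\<^sup>2) i})))
      + real n * (20 * \<rho> / \<epsilon>\<^sup>2)" by (simp add: \<delta>_def)
    also have "\<dots> \<le> K * (\<gamma> / (4 * K) * real n + \<gamma> / (4 * K) * real n + \<eta> * (5 * real n)) + real n * (\<gamma> / 4)"
    proof (intro add_mono mult_left_mono order.refl)
      show "real (card {i\<in>{1..n}. 0 < d i \<and> d i < \<epsilon>}) \<le> \<gamma> / (4 * K) * real n"
        using n0[of n] n_ge by simp
      have "8 * K \<le> \<gamma> * real m" using m(4) \<gamma> by (simp add: field_simps)
      then have "8 * K * real m \<le> \<gamma> * real m * real m" by (simp add: mult_right_mono)
      moreover have "\<gamma> * (real m * real m) \<le> \<gamma> * real n"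
        using \<gamma> square_bracket_bounds(1)[OF m(1) n(1)] by (intro mult_left_mono) auto
      ultimately have "8 * K * real m \<le> \<gamma> * real n" by (simp add: mult.assoc)
      then show "2 * real m \<le> \<gamma> / (4 * K) * real n"
        using K_pos by (simp add: field_simps)
      have "0 \<le> \<eta>" using \<gamma> K_pos by (simp add: \<eta>_def)
      with square_bracket_bounds(2)[OF m(1) n(1)]
      have "\<eta> * (real (m\<^sup>2) + real ((Suc m)\<^sup>2)) \<le> \<eta> * (5 * real n)"
        by (intro mult_left_mono)
      then have "\<eta> * real (m\<^sup>2) + \<eta> * real ((Suc m)\<^sup>2) \<le> \<eta> * (5 * real n)"
        by (simp only: distrib_left)
      then show "real (card {i\<in>{1..m\<^sup>2}. deviant D T d t \<delta> (m\<^sup>2) i})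
          + real (card {i\<in>{1..(Suc m)\<^sup>2}. deviant D T d t \<delta> ((Suc m)\<^sup>2) i}) \<le> \<eta> * (5 * real n)"
        using k0[of m] k0[of "Suc m"] m(2) by linarith
    qed (use \<rho> K_pos in auto)
    also have "\<dots> = \<gamma> * real n" using K_pos by (simp add: \<eta>_def field_simps)
    finally show "(\<Sum>i\<in>{1..n}. \<bar>C n i - c i\<bar>) \<le> \<gamma> * real n" .
  qed
qed

theorem average_C_tendsto:
  assumes few_small: "\<And>\<gamma>. 0 < \<gamma> \<Longrightarrow>
      \<exists>\<epsilon>>0. eventually (\<lambda>n. real (card {i\<in>{1..n}. 0 < d i \<and> d i < \<epsilon>}) < \<gamma> * real n) sequentially"
    and few_deviant: "\<And>\<delta> \<eta>. 0 < \<delta> \<Longrightarrow> 0 < \<eta> \<Longrightarrow>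
      eventually (\<lambda>k. real (card {i\<in>{1..k\<^sup>2}. deviant D T d t \<delta> (k\<^sup>2) i}) < \<eta> * real (k\<^sup>2)) sequentially"
    and average_c: "(\<lambda>n. (\<Sum>i\<in>{1..n}. c i) / real n) \<longlonglongrightarrow> L"
  shows "(\<lambda>n. (\<Sum>i\<in>{1..n}. C n i) / real n) \<longlonglongrightarrow> L"
proof -
  have "(\<lambda>n. (\<Sum>i\<in>{1..n}. C n i) / real n - (\<Sum>i\<in>{1..n}. c i) / real n) \<longlonglongrightarrow> 0"
  proof (rule tendstoI)
    fix e :: real assume e: "0 < e"
    have "eventually (\<lambda>n. (\<Sum>i\<in>{1..n}. \<bar>C n i - c i\<bar>) \<le> e / 2 * real n) sequentially"
      by (rule eventually_sum_abs_C_diff_le[OF few_small few_deviant]) (use e in simp_all)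
    then show "eventually (\<lambda>n. dist ((\<Sum>i\<in>{1..n}. C n i) / real n - (\<Sum>i\<in>{1..n}. c i) / real n) 0 < e) sequentially"
    proof (rule eventually_mono)
      fix n assume bound: "(\<Sum>i\<in>{1..n}. \<bar>C n i - c i\<bar>) \<le> e / 2 * real n"
      have "dist ((\<Sum>i\<in>{1..n}. C n i) / real n - (\<Sum>i\<in>{1..n}. c i) / real n) 0
          = \<bar>\<Sum>i\<in>{1..n}. C n i - c i\<bar> / real n"
        by (simp add: dist_real_def sum_subtractf diff_divide_distrib[symmetric])
      also have "\<dots> \<le> (\<Sum>i\<in>{1..n}. \<bar>C n i - c i\<bar>) / real n"
        by (intro divide_right_mono sum_abs) auto
      also have "\<dots> \<le> e / 2" using bound e by (cases "n = 0") (simp_all add: field_simps)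
      finally show "dist ((\<Sum>i\<in>{1..n}. C n i) / real n - (\<Sum>i\<in>{1..n}. c i) / real n) 0 < e"
        using e by simp
    qed
  qed
  from tendsto_add[OF this average_c] show ?thesis by simp
qed

end

section \<open>The random graph\<close>

lemma ex_inverse_Suc_le:
  assumes "0 < (x::real)"
  obtains r where "1 / real (Suc r) \<le> x"
proof -
  obtain n :: nat where "0 < n" "inverse (real n) < x"
    using ex_inverse_of_nat_less[OF assms] by auto
  then have "1 / real (Suc (n - 1)) \<le> x" by (simp add: inverse_eq_divide)
  then show ?thesis by (rule that)
qed

lemma (in prob_space) expectation_square_sum_le:
  fixes b :: "'i \<Rightarrow> 'a \<Rightarrow> real"
  assumes fin: "finite P"
    and measurable[measurable]: "\<And>p. p \<in> P \<Longrightarrow> b p \<in> borel_measurable M"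
    and bounded: "\<And>p \<omega>. p \<in> P \<Longrightarrow> \<bar>b p \<omega>\<bar> \<le> 1"
    and uncorrelated: "\<And>p q. p \<in> P \<Longrightarrow> q \<in> P \<Longrightarrow> \<not> R p q \<Longrightarrow> expectation (\<lambda>\<omega>. b p \<omega> * b q \<omega>) = 0"
  shows "expectation (\<lambda>\<omega>. (\<Sum>p\<in>P. b p \<omega>)\<^sup>2) \<le> (\<Sum>p\<in>P. real (card {q\<in>P. R p q}))"
proof -
  have prod_le_1: "b p \<omega> * b q \<omega> \<le> 1" if "p \<in> P" "q \<in> P" for p q \<omega>
    using bounded[OF that(1), of \<omega>] bounded[OF that(2), of \<omega>]
    by (metis abs_ge_self abs_mult dual_order.trans mult_le_one abs_ge_zero)
  have int: "integrable M (\<lambda>\<omega>. b p \<omega> * b q \<omega>)" if "p \<in> P" "q \<in> P" for p q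
    by (rule integrable_const_bound[where B=1])
      (use bounded[OF that(1)] bounded[OF that(2)] that in \<open>auto simp: abs_mult intro!: mult_le_one\<close>)
  have le: "expectation (\<lambda>\<omega>. b p \<omega> * b q \<omega>) \<le> (if R p q then 1 else 0)" if "p \<in> P" "q \<in> P" for p q
    using integral_le_const[OF int[OF that]] prod_le_1[OF that] uncorrelated[OF that] by auto
  have "expectation (\<lambda>\<omega>. (\<Sum>p\<in>P. b p \<omega>)\<^sup>2) = expectation (\<lambda>\<omega>. \<Sum>p\<in>P. \<Sum>q\<in>P. b p \<omega> * b q \<omega>)"
    by (simp add: power2_eq_square sum_product)
  also have "\<dots> = (\<Sum>p\<in>P. \<Sum>q\<in>P. expectation (\<lambda>\<omega>. b p \<omega> * b q \<omega>))"
    using int by (simp add: integral_sum)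
  also have "\<dots> \<le> (\<Sum>p\<in>P. \<Sum>q\<in>P. if R p q then 1 else 0)"
    by (intro sum_mono le)
  also have "\<dots> = (\<Sum>p\<in>P. real (card {q\<in>P. R p q}))"
    using fin by (simp add: real_card_filter_eq_sum)
  finally show ?thesis .
qed

lemma square_sum_le_square_card:
  fixes f :: "'b \<Rightarrow> real"
  assumes "\<And>p. p \<in> P \<Longrightarrow> \<bar>f p\<bar> \<le> 1"
  shows "(\<Sum>p\<in>P. f p)\<^sup>2 \<le> (real (card P))\<^sup>2"
proof -
  have "\<bar>\<Sum>p\<in>P. f p\<bar> \<le> (\<Sum>p\<in>P. \<bar>f p\<bar>)" by (rule sum_abs)
  also have "\<dots> \<le> (\<Sum>p\<in>P. 1)" by (rule sum_mono) (rule assms)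
  finally have "\<bar>\<Sum>p\<in>P. f p\<bar> \<le> real (card P)" by simp
  then show ?thesis using power_mono[of "\<bar>\<Sum>p\<in>P. f p\<bar>" "real (card P)" 2] by simp
qed

locale clustering_model = prob_space M
  for M :: "'a measure" +
  fixes X :: "nat \<Rightarrow> 'a \<Rightarrow> real" and F :: "real measure"
    and fc :: "real \<Rightarrow> real \<Rightarrow> real" and B :: "real set"
  assumes X_measurable[measurable]: "\<And>i. X i \<in> borel_measurable M"
    and indep_X: "indep_vars (\<lambda>_. borel) X UNIV"
    and distr_X: "\<And>i. distr M borel (X i) = F"
    and fc_measurable[measurable]: "(\<lambda>(x, y). fc x y) \<in> borel_measurable (borel \<Otimes>\<^sub>M borel)"
    and fc_sym: "\<And>x y. fc x y = fc y x"
    and B_borel[measurable]: "B \<in> sets borel"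
begin

lemma prob_space_F: "prob_space F"
  using prob_space_distr[OF X_measurable[of 0]] distr_X[of 0] by simp

lemma sets_F[simp, measurable_cong]: "sets F = sets borel"
  using distr_X[of 0] by (metis sets_distr)

lemma h_D_measurable[measurable]: "(\<lambda>(x, y). h_D fc B x y) \<in> borel_measurable (borel \<Otimes>\<^sub>M borel)"
  unfolding h_D_def by measurable

lemma h_T_measurable[measurable]:
  "(\<lambda>(x, y, z). h_T fc B x y z) \<in> borel_measurable (borel \<Otimes>\<^sub>M borel \<Otimes>\<^sub>M borel)"
  unfolding h_T_def by measurable

lemma h_D_nonneg[simp]: "0 \<le> h_D fc B x y" and h_D_le_1[simp]: "h_D fc B x y \<le> 1"
  by (auto simp: h_D_def indicator_def)

lemma h_T_nonneg[simp]: "0 \<le> h_T fc B x y z" and h_T_le_1[simp]: "h_T fc B x y z \<le> 1"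
  by (auto simp: h_T_def indicator_def)

lemma integrable_h_D: "integrable F (h_D fc B x)"
proof -
  interpret F: prob_space F by (rule prob_space_F)
  show ?thesis by (rule F.integrable_const_bound[where B=1]) auto
qed

lemma integrable_h_T: "integrable F (h_T fc B x y)"
proof -
  interpret F: prob_space F by (rule prob_space_F)
  show ?thesis by (rule F.integrable_const_bound[where B=1]) auto
qed

lemma E_D_nonneg: "0 \<le> E_D F fc B x" and E_D_le_1: "E_D F fc B x \<le> 1"
proof -
  interpret F: prob_space F by (rule prob_space_F)
  show "0 \<le> E_D F fc B x" unfolding E_D_def by (intro integral_nonneg_AE) auto
  show "E_D F fc B x \<le> 1" unfolding E_D_def by (intro F.integral_le_const integrable_h_D) auto
qed

lemma E_T_nonneg: "0 \<le> E_T F fc B x"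
  unfolding E_T_def by (intro integral_nonneg_AE AE_I2 integral_nonneg_AE) auto

text \<open>Dropping the factor for the edge between \<open>y\<close> and \<open>z\<close> decouples the two integrals.\<close>

lemma E_T_le_E_D_square: "E_T F fc B x \<le> (E_D F fc B x)\<^sup>2"
proof -
  interpret F: prob_space F by (rule prob_space_F)
  have inner: "(\<integral>z. h_T fc B x y z \<partial>F) \<le> h_D fc B x y * E_D F fc B x" for y
  proof -
    have "(\<integral>z. h_T fc B x y z \<partial>F) \<le> (\<integral>z. h_D fc B x y * h_D fc B x z \<partial>F)"
    proof (rule integral_mono[OF integrable_h_T])
      show "integrable F (\<lambda>z. h_D fc B x y * h_D fc B x z)" using integrable_h_D by simp
      show "h_T fc B x y z \<le> h_D fc B x y * h_D fc B x z" for z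
        by (auto simp: h_T_def h_D_def indicator_def fc_sym[of z x])
    qed
    then show ?thesis unfolding E_D_def by simp
  qed
  show ?thesis
  proof (cases "integrable F (\<lambda>y. \<integral>z. h_T fc B x y z \<partial>F)")
    case True
    have "E_T F fc B x \<le> (\<integral>y. h_D fc B x y * E_D F fc B x \<partial>F)"
      unfolding E_T_def by (rule integral_mono[OF True _ inner]) (use integrable_h_D in simp)
    then show ?thesis by (simp add: E_D_def power2_eq_square)
  next
    case False
    then show ?thesis by (simp add: E_T_def not_integrable_integral_eq)
  qed
qed

lemma E_T_le_1: "E_T F fc B x \<le> 1"
  using E_T_le_E_D_square[of x] E_D_nonneg[of x] E_D_le_1[of x] power_le_one[of "E_D F fc B x" 2]
  by linarith

lemma E_D_measurable[measurable]: "E_D F fc B \<in> borel_measurable borel"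
proof -
  interpret F: prob_space F by (rule prob_space_F)
  have "sets (borel \<Otimes>\<^sub>M F) = sets (borel \<Otimes>\<^sub>M borel)" by (intro sets_pair_measure_cong) simp_all
  then have "(\<lambda>(x, y). h_D fc B x y) \<in> borel_measurable (borel \<Otimes>\<^sub>M F)"
    using measurable_cong_sets by fastforce
  then show ?thesis
    unfolding E_D_def[abs_def] by (rule F.borel_measurable_lebesgue_integral)
qed

lemma E_T_measurable[measurable]: "E_T F fc B \<in> borel_measurable borel"
proof -
  interpret F: prob_space F by (rule prob_space_F)
  have sets_eq: "sets ((borel \<Otimes>\<^sub>M borel) \<Otimes>\<^sub>M F) = sets ((borel \<Otimes>\<^sub>M borel) \<Otimes>\<^sub>M borel)"
    by (intro sets_pair_measure_cong) simp_all
  have "(\<lambda>(xy, z). h_T fc B (fst xy) (snd xy) z) \<in> borel_measurable ((borel \<Otimes>\<^sub>M borel) \<Otimes>\<^sub>M borel)"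
    unfolding h_T_def by measurable
  then have "(\<lambda>(xy, z). h_T fc B (fst xy) (snd xy) z) \<in> borel_measurable ((borel \<Otimes>\<^sub>M borel) \<Otimes>\<^sub>M F)"
    by (simp add: measurable_cong_sets[OF sets_eq refl])
  then have "(\<lambda>xy. \<integral>z. h_T fc B (fst xy) (snd xy) z \<partial>F) \<in> borel_measurable (borel \<Otimes>\<^sub>M borel)"
    by (rule F.borel_measurable_lebesgue_integral)
  moreover have "sets (borel \<Otimes>\<^sub>M F) = sets (borel \<Otimes>\<^sub>M borel)" by (intro sets_pair_measure_cong) simp_all
  ultimately have "(\<lambda>(x, y). \<integral>z. h_T fc B x y z \<partial>F) \<in> borel_measurable (borel \<Otimes>\<^sub>M F)"
    using measurable_cong_sets by (fastforce simp: case_prod_beta')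
  then show ?thesis
    unfolding E_T_def[abs_def] by (rule F.borel_measurable_lebesgue_integral)
qed

lemma indep_var_X: "i \<noteq> j \<Longrightarrow> indep_var borel (X i) borel (X j)"
  using indep_var_compose[OF indep_var_restrict[OF indep_X, of "{i}" "{j}"], of "\<lambda>f. f i" borel "\<lambda>f. f j" borel]
  by (simp add: comp_def)

lemma distr_pair_X:
  "i \<noteq> j \<Longrightarrow> distr M (borel \<Otimes>\<^sub>M borel) (\<lambda>\<omega>. (X i \<omega>, X j \<omega>)) = F \<Otimes>\<^sub>M F"
  using indep_var_distribution_eq[THEN iffD1, OF indep_var_X] distr_X by simp

lemma indep_var_pairs_X:
  assumes "{j, k} \<inter> {j', k'} = {}"
  shows "indep_var (borel \<Otimes>\<^sub>M borel) (\<lambda>\<omega>. (X j \<omega>, X k \<omega>)) (borel \<Otimes>\<^sub>M borel) (\<lambda>\<omega>. (X j' \<omega>, X k' \<omega>))"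
  using indep_var_compose[OF indep_var_restrict[OF indep_X, of "{j, k}" "{j', k'}"],
      of "\<lambda>f. (f j, f k)" "borel \<Otimes>\<^sub>M borel" "\<lambda>f. (f j', f k')" "borel \<Otimes>\<^sub>M borel"] assms
  by (simp add: comp_def)

lemma expectation_condition_on_X:
  fixes G :: "real \<Rightarrow> (nat \<Rightarrow> real) \<Rightarrow> real" and K :: real
  assumes "i \<notin> A"
    and G_measurable[measurable]: "(\<lambda>(x, u). G x u) \<in> borel_measurable (borel \<Otimes>\<^sub>M PiM A (\<lambda>_. borel))"
    and bounded: "\<And>x u. \<bar>G x u\<bar> \<le> K"
  shows "expectation (\<lambda>\<omega>. G (X i \<omega>) (restrict (\<lambda>k. X k \<omega>) A)) =
         (\<integral>x. expectation (\<lambda>\<omega>. G x (restrict (\<lambda>k. X k \<omega>) A)) \<partial>F)"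
proof -
  define U where "U \<omega> = restrict (\<lambda>k. X k \<omega>) A" for \<omega>
  define V where "V \<omega> = restrict (\<lambda>k. X k \<omega>) {i}" for \<omega>
  have U_measurable[measurable]: "U \<in> measurable M (PiM A (\<lambda>_. borel))"
    unfolding U_def by measurable
  have V_measurable[measurable]: "V \<in> measurable M (PiM {i} (\<lambda>_. borel))"
    unfolding V_def by measurable
  define MU where "MU = distr M (PiM A (\<lambda>_. borel)) U"
  define MV where "MV = distr M (PiM {i} (\<lambda>_. borel)) V"
  interpret F: prob_space F by (rule prob_space_F)
  interpret PF: product_prob_space "\<lambda>_. F" ..
  interpret MU: prob_space MU unfolding MU_def by (rule prob_space_distr) simp
  interpret MV: prob_space MV unfolding MV_def by (rule prob_space_distr) simp
  interpret FU: pair_prob_space MV MU ..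
  have "indep_var (PiM {i} (\<lambda>_. borel)) V (PiM A (\<lambda>_. borel)) U"
    unfolding U_def V_def using \<open>i \<notin> A\<close> by (intro indep_var_restrict[OF indep_X]) auto
  from indep_var_distribution_eq[THEN iffD1, OF this]
  have joint: "distr M (PiM {i} (\<lambda>_. borel) \<Otimes>\<^sub>M PiM A (\<lambda>_. borel)) (\<lambda>\<omega>. (V \<omega>, U \<omega>)) = MV \<Otimes>\<^sub>M MU"
    by (simp add: MU_def MV_def)
  have MV_eq: "MV = PiM {i} (\<lambda>_. F)"
  proof -
    have "indep_vars (\<lambda>_. borel) X {i}" by (rule indep_vars_subset[OF indep_X]) auto
    then have "distr M (PiM {i} (\<lambda>_. borel)) (\<lambda>x. \<lambda>i\<in>{i}. X i x) = PiM {i} (\<lambda>i. distr M borel (X i))"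
      by (subst indep_vars_iff_distr_eq_PiM[symmetric]) auto
    moreover have "V = (\<lambda>x. \<lambda>i\<in>{i}. X i x)" by (simp add: V_def[abs_def])
    ultimately show ?thesis by (simp add: MV_def distr_X)
  qed
  define G' where "G' v u = G (v i) u" for v u
  have G'_measurable_Pi[measurable]:
    "(\<lambda>(v, u). G' v u) \<in> borel_measurable (PiM {i} (\<lambda>_. borel) \<Otimes>\<^sub>M PiM A (\<lambda>_. borel))"
    unfolding G'_def by measurable
  moreover have "sets (MV \<Otimes>\<^sub>M MU) = sets (PiM {i} (\<lambda>_. borel) \<Otimes>\<^sub>M PiM A (\<lambda>_. borel))"
    by (intro sets_pair_measure_cong) (simp_all add: MU_def MV_def)
  ultimately have G'_measurable: "(\<lambda>(v, u). G' v u) \<in> borel_measurable (MV \<Otimes>\<^sub>M MU)"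
    using measurable_cong_sets by blast
  have integrable_G': "integrable (MV \<Otimes>\<^sub>M MU) (\<lambda>(v, u). G' v u)"
    by (rule FU.integrable_const_bound[where B=K, OF _ G'_measurable]) (auto simp: G'_def bounded)
  have "expectation (\<lambda>\<omega>. G (X i \<omega>) (U \<omega>)) = expectation (\<lambda>\<omega>. (\<lambda>(v, u). G' v u) (V \<omega>, U \<omega>))"
    by (simp add: G'_def V_def)
  also have "\<dots> = (\<integral>p. (\<lambda>(v, u). G' v u) p \<partial>distr M (PiM {i} (\<lambda>_. borel) \<Otimes>\<^sub>M PiM A (\<lambda>_. borel)) (\<lambda>\<omega>. (V \<omega>, U \<omega>)))"
    by (subst integral_distr) auto
  also have "\<dots> = (\<integral>v. (\<integral>u. G' v u \<partial>MU) \<partial>MV)"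
    using FU.integral_fst[OF integrable_G'] by (simp add: joint)
  also have "\<dots> = (\<integral>v. (\<lambda>x. \<integral>u. G x u \<partial>MU) (v i) \<partial>PiM {i} (\<lambda>_. F))"
    by (simp add: MV_eq G'_def)
  also have "\<dots> = (\<integral>x. (\<integral>u. G x u \<partial>MU) \<partial>F)"
  proof (rule PF.product_integral_singleton)
    have "(\<lambda>x. \<integral>u. G x u \<partial>MU) \<in> borel_measurable borel"
    proof (rule MU.borel_measurable_lebesgue_integral)
      show "(\<lambda>(x, u). G x u) \<in> borel_measurable (borel \<Otimes>\<^sub>M MU)"
        using G_measurable by (simp add: measurable_cong_sets[OF sets_pair_measure_cong[OF refl, of MU "PiM A (\<lambda>_. borel)" borel] refl] MU_def)
    qed
    then show "(\<lambda>x. \<integral>u. G x u \<partial>MU) \<in> borel_measurable F" by simp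
  qed
  also have "\<dots> = (\<integral>x. expectation (\<lambda>\<omega>. G x (U \<omega>)) \<partial>F)"
  proof -
    have "(\<integral>u. G x u \<partial>MU) = expectation (\<lambda>\<omega>. G x (U \<omega>))" for x
    proof -
      have "(\<lambda>u. G x u) \<in> borel_measurable (PiM A (\<lambda>_. borel))" by measurable
      then show ?thesis unfolding MU_def by (subst integral_distr) auto
    qed
    then show ?thesis by simp
  qed
  finally show ?thesis by (simp add: U_def)
qed

lemma expectation_le_by_conditioning:
  fixes G :: "real \<Rightarrow> (nat \<Rightarrow> real) \<Rightarrow> real"
  assumes "i \<notin> A"
    and "(\<lambda>(x, u). G x u) \<in> borel_measurable (borel \<Otimes>\<^sub>M PiM A (\<lambda>_. borel))"
    and "\<And>x u. \<bar>G x u\<bar> \<le> K"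
    and le: "\<And>x. expectation (\<lambda>\<omega>. G x (restrict (\<lambda>k. X k \<omega>) A)) \<le> c" and "0 \<le> c"
  shows "expectation (\<lambda>\<omega>. G (X i \<omega>) (restrict (\<lambda>k. X k \<omega>) A)) \<le> c"
proof -
  interpret F: prob_space F by (rule prob_space_F)
  have "(\<integral>x. expectation (\<lambda>\<omega>. G x (restrict (\<lambda>k. X k \<omega>) A)) \<partial>F) \<le> c"
  proof (cases "integrable F (\<lambda>x. expectation (\<lambda>\<omega>. G x (restrict (\<lambda>k. X k \<omega>) A)))")
    case True
    then show ?thesis by (rule F.integral_le_const) (use le in simp)
  qed (simp add: not_integrable_integral_eq \<open>0 \<le> c\<close>)
  then show ?thesis using expectation_condition_on_X[OF assms(1-3)] by simp
qed

lemma expectation_h_D: "expectation (\<lambda>\<omega>. h_D fc B x (X j \<omega>)) = E_D F fc B x"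
  unfolding E_D_def by (subst distr_X[of j, symmetric], subst integral_distr) auto

lemma expectation_h_T:
  assumes "j \<noteq> k"
  shows "expectation (\<lambda>\<omega>. h_T fc B x (X j \<omega>) (X k \<omega>)) = E_T F fc B x"
proof -
  interpret F: prob_space F by (rule prob_space_F)
  interpret FF: pair_prob_space F F ..
  have sets_eq: "sets (F \<Otimes>\<^sub>M F) = sets (borel \<Otimes>\<^sub>M borel)"
    by (intro sets_pair_measure_cong) simp_all
  have "(\<lambda>(y, z). h_T fc B x y z) \<in> borel_measurable (borel \<Otimes>\<^sub>M borel)"
    unfolding h_T_def by measurable
  then have "integrable (F \<Otimes>\<^sub>M F) (\<lambda>(y, z). h_T fc B x y z)"
    by (intro FF.integrable_const_bound[where B=1]) (auto simp: measurable_cong_sets[OF sets_eq refl])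
  from FF.integral_fst[OF this]
  have "(\<integral>p. (\<lambda>(y, z). h_T fc B x y z) p \<partial>(F \<Otimes>\<^sub>M F)) = E_T F fc B x"
    unfolding E_T_def by simp
  moreover have "expectation (\<lambda>\<omega>. h_T fc B x (X j \<omega>) (X k \<omega>)) =
      (\<integral>p. (\<lambda>(y, z). h_T fc B x y z) p \<partial>distr M (borel \<Otimes>\<^sub>M borel) (\<lambda>\<omega>. (X j \<omega>, X k \<omega>)))"
    by (subst integral_distr) (auto simp: h_T_def)
  ultimately show ?thesis by (simp add: distr_pair_X[OF assms])
qed

lemma abs_h_D_minus_E_D_le_1: "\<bar>h_D fc B x y - E_D F fc B x\<bar> \<le> 1"
  using E_D_nonneg[of x] E_D_le_1[of x] h_D_nonneg[of x y] h_D_le_1[of x y] by linarith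

lemma abs_h_T_minus_E_T_le_1: "\<bar>h_T fc B x y z - E_T F fc B x\<bar> \<le> 1"
  using E_T_nonneg[of x] E_T_le_1[of x] h_T_nonneg[of x y z] h_T_le_1[of x y z] by linarith

lemma expectation_centered_degree_square_le:
  assumes "finite A"
  shows "expectation (\<lambda>\<omega>. (\<Sum>j\<in>A. h_D fc B x (X j \<omega>) - E_D F fc B x)\<^sup>2) \<le> card A"
proof -
  have "expectation (\<lambda>\<omega>. (\<Sum>j\<in>A. h_D fc B x (X j \<omega>) - E_D F fc B x)\<^sup>2) \<le> (\<Sum>j\<in>A. real (card {k\<in>A. j = k}))"
  proof (rule expectation_square_sum_le[OF assms])
    fix j k :: nat assume "j \<noteq> k"
    define g where "g y = h_D fc B x y - E_D F fc B x" for y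
    have g_measurable[measurable]: "g \<in> borel_measurable borel"
      unfolding g_def[abs_def] by measurable
    have int: "integrable M (\<lambda>\<omega>. g (X l \<omega>))" for l
      by (rule integrable_const_bound[where B=1]) (auto simp: g_def abs_h_D_minus_E_D_le_1)
    have "indep_var borel (g \<circ> X j) borel (g \<circ> X k)"
      by (rule indep_var_compose[OF indep_var_X[OF \<open>j \<noteq> k\<close>]]) measurable
    from indep_var_lebesgue_integral[OF this[unfolded comp_def] int int]
    have "expectation (\<lambda>\<omega>. g (X j \<omega>) * g (X k \<omega>)) = expectation (\<lambda>\<omega>. g (X j \<omega>)) * expectation (\<lambda>\<omega>. g (X k \<omega>))" .
    moreover have "expectation (\<lambda>\<omega>. g (X j \<omega>)) = 0"
      using expectation_h_D[of x j] unfolding g_def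
      by (subst Bochner_Integration.integral_diff) (auto intro: integrable_const_bound[where B=1] simp: prob_space)
    ultimately show "expectation (\<lambda>\<omega>. (h_D fc B x (X j \<omega>) - E_D F fc B x) * (h_D fc B x (X k \<omega>) - E_D F fc B x)) = 0"
      by (simp add: g_def)
  qed (simp_all add: abs_h_D_minus_E_D_le_1)
  also have "\<dots> = card A"
  proof -
    have "{k\<in>A. j = k} = {j}" if "j \<in> A" for j using that by auto
    then show ?thesis by simp
  qed
  finally show ?thesis .
qed

lemma card_pairs_meeting_le:
  assumes "finite A"
  shows "card {q \<in> (SIGMA j:A. A - {j}). {fst p, snd p} \<inter> {fst q, snd q} \<noteq> {}} \<le> 4 * card A"
proof -
  let ?S = "{fst p, snd p}"
  have "card {q \<in> (SIGMA j:A. A - {j}). ?S \<inter> {fst q, snd q} \<noteq> {}} \<le> card ((?S \<times> A) \<union> (A \<times> ?S))"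
    by (rule card_mono) (use assms in auto)
  also have "\<dots> \<le> card (?S \<times> A) + card (A \<times> ?S)" by (rule card_Un_le)
  also have "\<dots> = 2 * (card ?S * card A)" by (simp add: card_cartesian_product)
  also have "card ?S \<le> 2" by (rule card_insert_le_m1) auto
  finally show ?thesis by simp
qed

text \<open>Two terms of the triangle sum are uncorrelated unless their index pairs meet, and each pair
  meets at most \<open>4 |A|\<close> others.\<close>

lemma expectation_centered_triangle_square_le:
  assumes fin: "finite A"
  shows "expectation (\<lambda>\<omega>. (\<Sum>(j, k)\<in>(SIGMA j:A. A - {j}). h_T fc B x (X j \<omega>) (X k \<omega>) - E_T F fc B x)\<^sup>2)
     \<le> 4 * real (card A) ^ 3"
proof -
  let ?P = "SIGMA j:A. A - {j}"
  define g where "g = (\<lambda>(y, z). h_T fc B x y z - E_T F fc B x)"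
  have g_measurable[measurable]: "g \<in> borel_measurable (borel \<Otimes>\<^sub>M borel)"
    unfolding g_def h_T_def by measurable
  have int: "integrable M (\<lambda>\<omega>. g (X j \<omega>, X k \<omega>))" for j k
    by (rule integrable_const_bound[where B=1]) (auto simp: g_def abs_h_T_minus_E_T_le_1)
  have "expectation (\<lambda>\<omega>. (\<Sum>p\<in>?P. g (X (fst p) \<omega>, X (snd p) \<omega>))\<^sup>2)
     \<le> (\<Sum>p\<in>?P. real (card {q\<in>?P. {fst p, snd p} \<inter> {fst q, snd q} \<noteq> {}}))"
  proof (rule expectation_square_sum_le)
    fix p q :: "nat \<times> nat" assume p: "p \<in> ?P" and "\<not> {fst p, snd p} \<inter> {fst q, snd q} \<noteq> {}"
    then have "indep_var borel (g \<circ> (\<lambda>\<omega>. (X (fst p) \<omega>, X (snd p) \<omega>))) borel (g \<circ> (\<lambda>\<omega>. (X (fst q) \<omega>, X (snd q) \<omega>)))"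
      by (intro indep_var_compose[OF indep_var_pairs_X]) auto
    from indep_var_lebesgue_integral[OF this[unfolded comp_def] int int]
    have "expectation (\<lambda>\<omega>. g (X (fst p) \<omega>, X (snd p) \<omega>) * g (X (fst q) \<omega>, X (snd q) \<omega>))
        = expectation (\<lambda>\<omega>. g (X (fst p) \<omega>, X (snd p) \<omega>)) * expectation (\<lambda>\<omega>. g (X (fst q) \<omega>, X (snd q) \<omega>))" .
    moreover have "expectation (\<lambda>\<omega>. g (X (fst p) \<omega>, X (snd p) \<omega>)) = 0"
    proof -
      have "fst p \<noteq> snd p" using p by auto
      from expectation_h_T[OF this, of x] show ?thesis unfolding g_def case_prod_conv
        by (subst Bochner_Integration.integral_diff) (auto intro: integrable_const_bound[where B=1] simp: prob_space)
    qed
    ultimately show "expectation (\<lambda>\<omega>. g (X (fst p) \<omega>, X (snd p) \<omega>) * g (X (fst q) \<omega>, X (snd q) \<omega>)) = 0"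
      by simp
  qed (use fin in \<open>auto simp: g_def abs_h_T_minus_E_T_le_1\<close>)
  also have "\<dots> \<le> (\<Sum>p\<in>?P. real (4 * card A))"
    by (intro sum_mono) (use card_pairs_meeting_le[OF fin] in \<open>simp only: of_nat_le_iff\<close>)
  also have "\<dots> = real (card A * (card A - 1)) * (4 * real (card A))"
    using fin by (simp add: card_off_diagonal_Sigma)
  also have "\<dots> \<le> real (card A * card A) * (4 * real (card A))"
    by (intro mult_right_mono of_nat_mono mult_left_mono) auto
  finally show ?thesis
    by (simp add: g_def case_prod_beta power3_eq_cube mult_ac)
qed

lemma expectation_degree_deviation_square_le:
  assumes i: "i \<in> {1..n}"
  shows "expectation (\<lambda>\<omega>. (real (degree_n fc B (\<lambda>k. X k \<omega>) n i) - (real n - 1) * E_D F fc B (X i \<omega>))\<^sup>2)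
    \<le> real n"
proof -
  define A where "A = {1..n} - {i}"
  have A: "finite A" "i \<notin> A" "card A \<le> n"
    using card_Diff1_le[of "{1..n}" i] by (auto simp: A_def)
  define G where "G x u = (\<Sum>j\<in>A. h_D fc B x (u j) - E_D F fc B x)\<^sup>2" for x and u :: "nat \<Rightarrow> real"
  have "expectation (\<lambda>\<omega>. (real (degree_n fc B (\<lambda>k. X k \<omega>) n i) - (real n - 1) * E_D F fc B (X i \<omega>))\<^sup>2)
      = expectation (\<lambda>\<omega>. G (X i \<omega>) (restrict (\<lambda>k. X k \<omega>) A))"
    unfolding degree_n_deviation_eq_sum[OF i] G_def A_def by simp
  also have "\<dots> \<le> card A"
  proof (rule expectation_le_by_conditioning[OF A(2)])
    show "(\<lambda>(x, u). G x u) \<in> borel_measurable (borel \<Otimes>\<^sub>M PiM A (\<lambda>_. borel))"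
      unfolding G_def by measurable
    show "\<bar>G x u\<bar> \<le> (real (card A))\<^sup>2" for x u
      unfolding G_def by (simp add: square_sum_le_square_card abs_h_D_minus_E_D_le_1)
    show "expectation (\<lambda>\<omega>. G x (restrict (\<lambda>k. X k \<omega>) A)) \<le> card A" for x
      using expectation_centered_degree_square_le[OF A(1), of x] by (simp add: G_def)
  qed simp
  finally show ?thesis using A(3) by simp
qed

lemma expectation_triangle_deviation_square_le:
  assumes i: "i \<in> {1..n}"
  shows "expectation (\<lambda>\<omega>. (2 * real (triangles_n fc B (\<lambda>k. X k \<omega>) n i)
      - (real n - 1) * (real n - 2) * E_T F fc B (X i \<omega>))\<^sup>2) \<le> 4 * real n ^ 3"
proof -
  define A where "A = {1..n} - {i}"
  let ?P = "SIGMA j:A. A - {j}"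
  have A: "finite A" "i \<notin> A" "card A \<le> n"
    using card_Diff1_le[of "{1..n}" i] by (auto simp: A_def)
  define G where "G x u = (\<Sum>(j, k)\<in>?P. h_T fc B x (u j) (u k) - E_T F fc B x)\<^sup>2"
    for x and u :: "nat \<Rightarrow> real"
  have G_restrict: "G x (restrict u A) = (\<Sum>(j, k)\<in>?P. h_T fc B x (u j) (u k) - E_T F fc B x)\<^sup>2" for x u
    unfolding G_def by (intro arg_cong[where f="\<lambda>y. y\<^sup>2"] sum.cong) auto
  have "expectation (\<lambda>\<omega>. (2 * real (triangles_n fc B (\<lambda>k. X k \<omega>) n i)
      - (real n - 1) * (real n - 2) * E_T F fc B (X i \<omega>))\<^sup>2)
      = expectation (\<lambda>\<omega>. G (X i \<omega>) (restrict (\<lambda>k. X k \<omega>) A))"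
    unfolding triangles_n_deviation_eq_sum[OF fc_sym i] G_restrict by (simp add: A_def)
  also have "\<dots> \<le> 4 * real (card A) ^ 3"
  proof (rule expectation_le_by_conditioning[OF A(2)])
    have "(\<lambda>z. h_T fc B (fst z) (snd z (fst p)) (snd z (snd p)) - E_T F fc B (fst z))
        \<in> borel_measurable (borel \<Otimes>\<^sub>M PiM A (\<lambda>_. borel))" if "p \<in> ?P" for p
    proof -
      have "fst p \<in> A" "snd p \<in> A" using that by auto
      then show ?thesis unfolding h_T_def by measurable
    qed
    then have "(\<lambda>z. (\<Sum>p\<in>?P. h_T fc B (fst z) (snd z (fst p)) (snd z (snd p)) - E_T F fc B (fst z))\<^sup>2)
        \<in> borel_measurable (borel \<Otimes>\<^sub>M PiM A (\<lambda>_. borel))"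
      by (intro borel_measurable_power borel_measurable_sum)
    then show "(\<lambda>(x, u). G x u) \<in> borel_measurable (borel \<Otimes>\<^sub>M PiM A (\<lambda>_. borel))"
      by (simp add: G_def case_prod_beta)
    show "\<bar>G x u\<bar> \<le> (real (card ?P))\<^sup>2" for x u
      unfolding G_def by (simp add: square_sum_le_square_card abs_h_T_minus_E_T_le_1 case_prod_beta)
    show "expectation (\<lambda>\<omega>. G x (restrict (\<lambda>k. X k \<omega>) A)) \<le> 4 * real (card A) ^ 3" for x
      using expectation_centered_triangle_square_le[OF A(1), of x] by (simp add: G_restrict)
  qed simp
  also have "\<dots> \<le> 4 * real n ^ 3" using A(3) by (simp add: power_mono)
  finally show ?thesis .
qed

abbreviation deviant_sample :: "real \<Rightarrow> nat \<Rightarrow> nat \<Rightarrow> 'a \<Rightarrow> bool" where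
  "deviant_sample \<delta> n i \<omega> \<equiv> deviant (degree_n fc B (\<lambda>k. X k \<omega>)) (triangles_n fc B (\<lambda>k. X k \<omega>))
     (\<lambda>k. E_D F fc B (X k \<omega>)) (\<lambda>k. E_T F fc B (X k \<omega>)) \<delta> n i"

lemma degree_n_measurable[measurable]: "(\<lambda>\<omega>. real (degree_n fc B (\<lambda>k. X k \<omega>) n i)) \<in> borel_measurable M"
  unfolding degree_n_eq_sum by measurable

lemma triangles_n_measurable[measurable]:
  "(\<lambda>\<omega>. real (triangles_n fc B (\<lambda>k. X k \<omega>) n i)) \<in> borel_measurable M"
proof -
  have "(\<lambda>\<omega>. real (triangles_n fc B (\<lambda>k. X k \<omega>) n i)) = (\<lambda>\<omega>.
      (\<Sum>(j, k)\<in>(SIGMA j:{1..n}-{i}. {1..n}-{i}-{j}). h_T fc B (X i \<omega>) (X j \<omega>) (X k \<omega>)) / 2)"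
  proof
    fix \<omega>
    from triangles_n_eq_sum[of fc B "\<lambda>k. X k \<omega>" n i, OF fc_sym]
    show "real (triangles_n fc B (\<lambda>k. X k \<omega>) n i) =
      (\<Sum>(j, k)\<in>(SIGMA j:{1..n}-{i}. {1..n}-{i}-{j}). h_T fc B (X i \<omega>) (X j \<omega>) (X k \<omega>)) / 2"
      by linarith
  qed
  then show ?thesis unfolding h_T_def by simp
qed

lemma sets_deviant_sample[measurable]: "{\<omega> \<in> space M. deviant_sample \<delta> n i \<omega>} \<in> sets M"
  unfolding deviant_def by measurable

lemma prob_deviant_sample_le:
  assumes i: "i \<in> {1..n}" and \<delta>: "0 < \<delta>"
  shows "prob {\<omega> \<in> space M. deviant_sample \<delta> n i \<omega>} \<le> 5 / (\<delta>\<^sup>2 * real n)"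
proof -
  define SD where "SD \<omega> = real (degree_n fc B (\<lambda>k. X k \<omega>) n i) - (real n - 1) * E_D F fc B (X i \<omega>)" for \<omega>
  define ST where "ST \<omega> = 2 * real (triangles_n fc B (\<lambda>k. X k \<omega>) n i)
      - (real n - 1) * (real n - 2) * E_T F fc B (X i \<omega>)" for \<omega>
  have n: "0 < real n" using i by simp
  have [measurable]: "SD \<in> borel_measurable M" "ST \<in> borel_measurable M"
    unfolding SD_def[abs_def] ST_def[abs_def] by measurable
  have "(SD \<omega>)\<^sup>2 \<le> (real (card ({1..n} - {i})))\<^sup>2" for \<omega>
    unfolding SD_def degree_n_deviation_eq_sum[OF i]
    by (rule square_sum_le_square_card) (rule abs_h_D_minus_E_D_le_1)
  then have "integrable M (\<lambda>\<omega>. (SD \<omega>)\<^sup>2)"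
    by (intro integrable_const_bound[where B="(real (card ({1..n} - {i})))\<^sup>2"]) auto
  then have "prob {\<omega> \<in> space M. \<bar>SD \<omega>\<bar> \<ge> \<delta> * real n} \<le> expectation (\<lambda>\<omega>. (SD \<omega>)\<^sup>2) / (\<delta> * real n)\<^sup>2"
    using \<delta> n by (intro second_moment_method) auto
  also have "\<dots> \<le> real n / (\<delta> * real n)\<^sup>2"
    unfolding SD_def by (intro divide_right_mono expectation_degree_deviation_square_le[OF i]) simp
  finally have prob_SD: "prob {\<omega> \<in> space M. \<bar>SD \<omega>\<bar> \<ge> \<delta> * real n} \<le> 1 / (\<delta>\<^sup>2 * real n)"
    using n by (simp add: power2_eq_square)
  have "(ST \<omega>)\<^sup>2 \<le> (real (card (SIGMA j:{1..n}-{i}. {1..n}-{i}-{j})))\<^sup>2" for \<omega>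
    unfolding ST_def triangles_n_deviation_eq_sum[OF fc_sym i] case_prod_beta
    by (rule square_sum_le_square_card) (rule abs_h_T_minus_E_T_le_1)
  then have "integrable M (\<lambda>\<omega>. (ST \<omega>)\<^sup>2)"
    by (intro integrable_const_bound[where B="(real (card (SIGMA j:{1..n}-{i}. {1..n}-{i}-{j})))\<^sup>2"]) auto
  then have "prob {\<omega> \<in> space M. \<bar>ST \<omega>\<bar> \<ge> \<delta> * real n ^ 2} \<le> expectation (\<lambda>\<omega>. (ST \<omega>)\<^sup>2) / (\<delta> * real n ^ 2)\<^sup>2"
    using \<delta> n by (intro second_moment_method) auto
  also have "\<dots> \<le> 4 * real n ^ 3 / (\<delta> * real n ^ 2)\<^sup>2"
    unfolding ST_def by (intro divide_right_mono expectation_triangle_deviation_square_le[OF i]) simp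
  finally have prob_ST: "prob {\<omega> \<in> space M. \<bar>ST \<omega>\<bar> \<ge> \<delta> * real n ^ 2} \<le> 4 / (\<delta>\<^sup>2 * real n)"
    using n by (simp add: power2_eq_square power3_eq_cube)
  have "{\<omega> \<in> space M. deviant_sample \<delta> n i \<omega>}
      = {\<omega> \<in> space M. \<bar>SD \<omega>\<bar> \<ge> \<delta> * real n} \<union> {\<omega> \<in> space M. \<bar>ST \<omega>\<bar> \<ge> \<delta> * real n ^ 2}"
    by (auto simp: deviant_def SD_def ST_def)
  then have "prob {\<omega> \<in> space M. deviant_sample \<delta> n i \<omega>}
      \<le> prob {\<omega> \<in> space M. \<bar>SD \<omega>\<bar> \<ge> \<delta> * real n} + prob {\<omega> \<in> space M. \<bar>ST \<omega>\<bar> \<ge> \<delta> * real n ^ 2}"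
    by (simp add: measure_Un_le)
  also have "\<dots> \<le> 5 / (\<delta>\<^sup>2 * real n)" using prob_SD prob_ST by simp
  finally show ?thesis .
qed

lemma card_deviant_sample_measurable[measurable]:
  "(\<lambda>\<omega>. real (card {i\<in>{1..n}. deviant_sample \<delta> n i \<omega>})) \<in> borel_measurable M"
proof (rule measurable_cong[THEN iffD1])
  show "(\<Sum>i\<in>{1..n}. indicator {\<omega> \<in> space M. deviant_sample \<delta> n i \<omega>} \<omega>) =
      real (card {i\<in>{1..n}. deviant_sample \<delta> n i \<omega>})" if "\<omega> \<in> space M" for \<omega>
    unfolding real_card_filter_eq_sum[OF finite_atLeastAtMost]
    using that by (intro sum.cong) (auto simp: indicator_def)
qed measurable

lemma prob_many_deviant_le:
  assumes n: "1 \<le> n" and \<delta>: "0 < \<delta>" and \<eta>: "0 < \<eta>"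
  shows "prob {\<omega> \<in> space M. \<eta> * real n \<le> real (card {i\<in>{1..n}. deviant_sample \<delta> n i \<omega>})}
    \<le> 5 / (\<delta>\<^sup>2 * \<eta> * real n)"
proof -
  define N where "N \<omega> = real (card {i\<in>{1..n}. deviant_sample \<delta> n i \<omega>})" for \<omega>
  have N_eq: "N \<omega> = (\<Sum>i\<in>{1..n}. indicator {\<omega> \<in> space M. deviant_sample \<delta> n i \<omega>} \<omega>)"
    if "\<omega> \<in> space M" for \<omega>
    unfolding N_def real_card_filter_eq_sum[OF finite_atLeastAtMost]
    using that by (intro sum.cong) (auto simp: indicator_def)
  have int: "integrable M (indicator {\<omega> \<in> space M. deviant_sample \<delta> n i \<omega>} :: 'a \<Rightarrow> real)" for i
    by (rule integrable_real_indicator) (simp_all add: emeasure_eq_measure)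
  have "expectation N = (\<Sum>i\<in>{1..n}. prob {\<omega> \<in> space M. deviant_sample \<delta> n i \<omega>})"
    using int by (simp add: Bochner_Integration.integral_cong[OF refl N_eq] Int_absorb2)
  also have "\<dots> \<le> (\<Sum>i\<in>{1..n}. 5 / (\<delta>\<^sup>2 * real n))"
    by (intro sum_mono prob_deviant_sample_le \<delta>) auto
  also have "\<dots> = 5 / \<delta>\<^sup>2" using n by simp
  finally have E_N: "expectation N \<le> 5 / \<delta>\<^sup>2" .
  have "card {i\<in>{1..n}. deviant_sample \<delta> n i \<omega>} \<le> card {1..n}" for \<omega>
    by (rule card_mono) auto
  moreover have "N \<in> borel_measurable M" unfolding N_def[abs_def] by measurable
  ultimately have "integrable M N"
    by (intro integrable_const_bound[where B="real n"]) (auto simp: N_def)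
  then have "prob {\<omega> \<in> space M. \<eta> * real n \<le> N \<omega>} \<le> expectation N / (\<eta> * real n)"
    by (rule integral_Markov_inequality_measure) (use n \<eta> in \<open>auto simp: N_def\<close>)
  also have "\<dots> \<le> (5 / \<delta>\<^sup>2) / (\<eta> * real n)"
    using E_N n \<eta> by (intro divide_right_mono) auto
  finally show ?thesis by (simp add: N_def)
qed

text \<open>The bound of \<open>prob_many_deviant_le\<close> is only \<open>O(1/n)\<close>, so Borel--Cantelli is applied along
  the squares, where it is summable.\<close>

lemma AE_few_deviant_at_squares:
  assumes \<delta>: "0 < \<delta>" and \<eta>: "0 < \<eta>"
  shows "AE \<omega> in M. eventually (\<lambda>k. real (card {i\<in>{1..k\<^sup>2}. deviant_sample \<delta> (k\<^sup>2) i \<omega>}) < \<eta> * real (k\<^sup>2))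
    sequentially"
proof -
  define A where "A k = {\<omega> \<in> space M. \<eta> * real ((Suc k)\<^sup>2) \<le>
      real (card {i\<in>{1..(Suc k)\<^sup>2}. deviant_sample \<delta> ((Suc k)\<^sup>2) i \<omega>})}" for k
  have A_sets[measurable]: "A k \<in> sets M" for k
    unfolding A_def by (intro borel_measurable_le borel_measurable_const card_deviant_sample_measurable)
  have prob_A: "prob (A k) \<le> 5 / (\<delta>\<^sup>2 * \<eta>) * inverse (real (Suc k) ^ 2)" for k
    using prob_many_deviant_le[of "(Suc k)\<^sup>2", OF _ \<delta> \<eta>] by (simp add: A_def field_simps)
  have "summable (\<lambda>k. inverse (real (Suc k) ^ 2))"
  proof -
    have "summable (\<lambda>k. inverse (real k ^ 2))" by (rule inverse_power_summable) simp
    from summable_ignore_initial_segment[OF this, of 1] show ?thesis by simp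
  qed
  then have "summable (\<lambda>k. prob (A k))"
    by (rule summable_comparison_test'[OF summable_mult[where c="5 / (\<delta>\<^sup>2 * \<eta>)"], of _ 0])
      (use prob_A in simp)
  then have "AE \<omega> in M. eventually (\<lambda>k. \<omega> \<in> space M - A k) sequentially"
    by (intro borel_cantelli_AE1) (auto simp: emeasure_eq_measure)
  then show ?thesis
  proof (rule AE_mp, intro AE_I2 impI)
    fix \<omega> assume "\<omega> \<in> space M" and "eventually (\<lambda>k. \<omega> \<in> space M - A k) sequentially"
    then show "eventually (\<lambda>k. real (card {i\<in>{1..k\<^sup>2}. deviant_sample \<delta> (k\<^sup>2) i \<omega>}) < \<eta> * real (k\<^sup>2))
      sequentially"
      by (subst eventually_sequentially_Suc[symmetric]) (auto simp: A_def not_le elim!: eventually_mono)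
  qed
qed

lemma AE_few_deviant:
  "AE \<omega> in M. \<forall>\<delta>>0. \<forall>\<eta>>0.
    eventually (\<lambda>k. real (card {i\<in>{1..k\<^sup>2}. deviant_sample \<delta> (k\<^sup>2) i \<omega>}) < \<eta> * real (k\<^sup>2)) sequentially"
proof -
  have "AE \<omega> in M. \<forall>r s. eventually (\<lambda>k. real (card {i\<in>{1..k\<^sup>2}. deviant_sample (1 / real (Suc r)) (k\<^sup>2) i \<omega>})
      < 1 / real (Suc s) * real (k\<^sup>2)) sequentially"
    by (simp only: AE_all_countable) (intro allI AE_few_deviant_at_squares; simp)
  then show ?thesis
  proof (rule AE_mp, intro AE_I2 impI allI)
    fix \<omega> and \<delta> \<eta> :: real
    assume few: "\<forall>r s. eventually (\<lambda>k. real (card {i\<in>{1..k\<^sup>2}. deviant_sample (1 / real (Suc r)) (k\<^sup>2) i \<omega>})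
      < 1 / real (Suc s) * real (k\<^sup>2)) sequentially"
      and "0 < \<delta>" "0 < \<eta>"
    then obtain r s where r: "1 / real (Suc r) \<le> \<delta>" and s: "1 / real (Suc s) \<le> \<eta>"
      by (metis ex_inverse_Suc_le)
    from few[rule_format, of r s]
    show "eventually (\<lambda>k. real (card {i\<in>{1..k\<^sup>2}. deviant_sample \<delta> (k\<^sup>2) i \<omega>}) < \<eta> * real (k\<^sup>2)) sequentially"
    proof eventually_elim
      case (elim k)
      have "{i\<in>{1..k\<^sup>2}. deviant_sample \<delta> (k\<^sup>2) i \<omega>}
          \<subseteq> {i\<in>{1..k\<^sup>2}. deviant_sample (1 / real (Suc r)) (k\<^sup>2) i \<omega>}"
        using deviant_antimono[OF _ r] by blast
      then have "card {i\<in>{1..k\<^sup>2}. deviant_sample \<delta> (k\<^sup>2) i \<omega>}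
          \<le> card {i\<in>{1..k\<^sup>2}. deviant_sample (1 / real (Suc r)) (k\<^sup>2) i \<omega>}"
        by (rule card_mono[rotated]) simp
      moreover have "1 / real (Suc s) * real (k\<^sup>2) \<le> \<eta> * real (k\<^sup>2)"
        using s by (intro mult_right_mono) auto
      ultimately show ?case using elim by linarith
    qed
  qed
qed

lemma prob_average_deviation_le:
  fixes \<phi> :: "real \<Rightarrow> real"
  assumes \<phi>_measurable[measurable]: "\<phi> \<in> borel_measurable borel"
    and bounded: "\<And>x. \<phi> x \<in> {a..b}" and "a < b" and "1 \<le> n" and "0 \<le> \<epsilon>"
  shows "prob {\<omega> \<in> space M. \<epsilon> \<le> \<bar>(\<Sum>i\<in>{1..n}. \<phi> (X i \<omega>)) / real n - (\<integral>x. \<phi> x \<partial>F)\<bar>}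
    \<le> 2 * exp (-2 * real n * \<epsilon>\<^sup>2 / (b - a)\<^sup>2)"
proof -
  interpret H: Hoeffding_ineq_iid M "{1..n}" "\<lambda>i \<omega>. \<phi> (X i \<omega>)" "\<lambda>\<omega>. \<phi> (X 1 \<omega>)" a b
      "expectation (\<lambda>\<omega>. \<phi> (X 1 \<omega>))"
  proof unfold_locales
    show "indep_vars (\<lambda>_. borel) (\<lambda>i \<omega>. \<phi> (X i \<omega>)) {1..n}"
      by (rule indep_vars_compose2[OF indep_vars_subset[OF indep_X]]) auto
    show "distr M borel (\<lambda>\<omega>. \<phi> (X i \<omega>)) = distr M borel (\<lambda>\<omega>. \<phi> (X 1 \<omega>))" for i
      using distr_distr[OF \<phi>_measurable X_measurable[of i]] distr_distr[OF \<phi>_measurable X_measurable[of 1]]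
      by (simp add: comp_def distr_X)
  qed (use bounded in auto)
  have mean: "expectation (\<lambda>\<omega>. \<phi> (X 1 \<omega>)) = (\<integral>x. \<phi> x \<partial>F)"
    by (subst distr_X[of 1, symmetric], subst integral_distr) auto
  have "{1..n} \<noteq> {}" using \<open>1 \<le> n\<close> by simp
  from H.Hoeffding_ineq_abs_ge'[OF \<open>0 \<le> \<epsilon>\<close> \<open>a < b\<close> this] show ?thesis
    by (simp only: card_atLeastAtMost mean diff_Suc_1)
qed

text \<open>Hoeffding's inequality makes the deviation probabilities of the sample means summable, so
  Borel--Cantelli gives the strong law of large numbers for bounded functions of the sample.\<close>

lemma AE_eventually_average_close:
  fixes \<phi> :: "real \<Rightarrow> real"
  assumes \<phi>_measurable[measurable]: "\<phi> \<in> borel_measurable borel"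
    and bounded: "\<And>x. \<phi> x \<in> {a..b}" and "a < b" and "0 < \<epsilon>"
  shows "AE \<omega> in M. eventually (\<lambda>n. \<bar>(\<Sum>i\<in>{1..n}. \<phi> (X i \<omega>)) / real n - (\<integral>x. \<phi> x \<partial>F)\<bar> < \<epsilon>)
    sequentially"
proof -
  let ?avg = "\<lambda>n \<omega>. (\<Sum>i\<in>{1..n}. \<phi> (X i \<omega>)) / real n"
  define A where "A n = {\<omega> \<in> space M. \<epsilon> \<le> \<bar>?avg (Suc n) \<omega> - (\<integral>x. \<phi> x \<partial>F)\<bar>}" for n
  define c where "c = exp (-2 * \<epsilon>\<^sup>2 / (b - a)\<^sup>2)"
  have [measurable]: "A n \<in> sets M" for n unfolding A_def by measurable
  have c: "0 < c" "c < 1" using \<open>a < b\<close> \<open>0 < \<epsilon>\<close> by (auto simp: c_def)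
  have prob_A: "prob (A n) \<le> 2 * c ^ Suc n" for n
  proof -
    have "prob (A n) \<le> 2 * exp (-2 * real (Suc n) * \<epsilon>\<^sup>2 / (b - a)\<^sup>2)"
      unfolding A_def by (rule prob_average_deviation_le[OF \<phi>_measurable bounded \<open>a < b\<close>]) (use \<open>0 < \<epsilon>\<close> in simp_all)
    also have "-2 * real (Suc n) * \<epsilon>\<^sup>2 / (b - a)\<^sup>2 = real (Suc n) * (-2 * \<epsilon>\<^sup>2 / (b - a)\<^sup>2)"
      by (simp only: times_divide_eq_right mult_ac)
    finally show ?thesis unfolding c_def by (simp only: exp_of_nat_mult)
  qed
  have "summable (\<lambda>n. 2 * c ^ Suc n)"
    using c by (intro summable_mult summable_Suc_iff[THEN iffD2] summable_geometric) auto
  then have "summable (\<lambda>n. prob (A n))"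
    by (rule summable_comparison_test'[of _ 0]) (use prob_A in simp)
  then have "AE \<omega> in M. eventually (\<lambda>n. \<omega> \<in> space M - A n) sequentially"
    by (intro borel_cantelli_AE1) (auto simp: emeasure_eq_measure)
  then show ?thesis
  proof (rule AE_mp, intro AE_I2 impI)
    fix \<omega> assume "\<omega> \<in> space M" and "eventually (\<lambda>n. \<omega> \<in> space M - A n) sequentially"
    then show "eventually (\<lambda>n. \<bar>?avg n \<omega> - (\<integral>x. \<phi> x \<partial>F)\<bar> < \<epsilon>) sequentially"
      by (subst eventually_sequentially_Suc[symmetric]) (auto simp: A_def not_le elim!: eventually_mono)
  qed
qed

lemma AE_average_tendsto_integral:
  fixes \<phi> :: "real \<Rightarrow> real"
  assumes \<phi>_measurable[measurable]: "\<phi> \<in> borel_measurable borel"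
    and bounded: "\<And>x. \<phi> x \<in> {a..b}" and "a < b"
  shows "AE \<omega> in M. (\<lambda>n. (\<Sum>i\<in>{1..n}. \<phi> (X i \<omega>)) / real n) \<longlonglongrightarrow> (\<integral>x. \<phi> x \<partial>F)"
proof -
  let ?avg = "\<lambda>n \<omega>. (\<Sum>i\<in>{1..n}. \<phi> (X i \<omega>)) / real n"
  have "AE \<omega> in M. \<forall>r. eventually (\<lambda>n. \<bar>?avg n \<omega> - (\<integral>x. \<phi> x \<partial>F)\<bar> < 1 / real (Suc r)) sequentially"
    unfolding AE_all_countable by (intro allI AE_eventually_average_close[OF \<phi>_measurable bounded \<open>a < b\<close>]) simp
  then show ?thesis
  proof (rule AE_mp, intro AE_I2 impI tendstoI)
    fix \<omega> and e :: real
    assume "\<forall>r. eventually (\<lambda>n. \<bar>?avg n \<omega> - (\<integral>x. \<phi> x \<partial>F)\<bar> < 1 / real (Suc r)) sequentially" and "0 < e"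
    moreover obtain r where "1 / real (Suc r) \<le> e" using ex_inverse_Suc_le[OF \<open>0 < e\<close>] .
    ultimately show "eventually (\<lambda>n. dist (?avg n \<omega>) (\<integral>x. \<phi> x \<partial>F) < e) sequentially"
      by (auto simp: dist_real_def elim!: allE[of _ r] eventually_mono)
  qed
qed

lemma measure_small_E_D_tendsto_0:
  "(\<lambda>r. measure F {x. 0 < E_D F fc B x \<and> E_D F fc B x < 1 / real (Suc r)}) \<longlonglongrightarrow> 0"
proof -
  interpret F: prob_space F by (rule prob_space_F)
  define A where "A r = {x. 0 < E_D F fc B x \<and> E_D F fc B x < 1 / real (Suc r)}" for r
  have "decseq A"
  proof (rule decseq_SucI)
    show "A (Suc r) \<subseteq> A r" for r
      using divide_left_mono[of "real (Suc r)" "real (Suc (Suc r))" 1] by (auto simp: A_def)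
  qed
  moreover have "range A \<subseteq> sets F" by (auto simp: A_def)
  ultimately have "(\<lambda>r. measure F (A r)) \<longlonglongrightarrow> measure F (\<Inter>r. A r)"
    by (intro F.finite_Lim_measure_decseq)
  moreover have "(\<Inter>r. A r) = {}"
  proof (rule ccontr)
    assume "(\<Inter>r. A r) \<noteq> {}"
    then obtain x where x: "\<And>r. x \<in> A r" by auto
    then have "0 < E_D F fc B x" by (auto simp: A_def)
    then obtain r where "1 / real (Suc r) \<le> E_D F fc B x" by (rule ex_inverse_Suc_le)
    with x[of r] show False by (auto simp: A_def)
  qed
  ultimately show ?thesis by (simp add: A_def)
qed

lemma AE_few_small_E_D:
  "AE \<omega> in M. \<forall>\<gamma>>0. \<exists>\<epsilon>>0. eventually (\<lambda>n.
     real (card {i\<in>{1..n}. 0 < E_D F fc B (X i \<omega>) \<and> E_D F fc B (X i \<omega>) < \<epsilon>}) < \<gamma> * real n) sequentially"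
proof -
  define S where "S r = {x. 0 < E_D F fc B x \<and> E_D F fc B x < 1 / real (Suc r)}" for r
  have S_sets[measurable]: "S r \<in> sets borel" for r unfolding S_def by measurable
  have "AE \<omega> in M. \<forall>r. (\<lambda>n. (\<Sum>i\<in>{1..n}. indicator (S r) (X i \<omega>)) / real n) \<longlonglongrightarrow> measure F (S r)"
  proof (unfold AE_all_countable, intro allI)
    fix r
    have "AE \<omega> in M. (\<lambda>n. (\<Sum>i\<in>{1..n}. indicator (S r) (X i \<omega>)) / real n) \<longlonglongrightarrow> (\<integral>x. indicator (S r) x \<partial>F)"
      by (rule AE_average_tendsto_integral[of _ 0 1]) (auto simp: indicator_def)
    moreover have "(\<integral>x. indicator (S r) x \<partial>F) = measure F (S r)" by simp
    ultimately show "AE \<omega> in M. (\<lambda>n. (\<Sum>i\<in>{1..n}. indicator (S r) (X i \<omega>)) / real n) \<longlonglongrightarrow> measure F (S r)"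
      by simp
  qed
  then show ?thesis
  proof (rule AE_mp, intro AE_I2 impI allI)
    fix \<omega> and \<gamma> :: real
    assume lim: "\<forall>r. (\<lambda>n. (\<Sum>i\<in>{1..n}. indicator (S r) (X i \<omega>)) / real n) \<longlonglongrightarrow> measure F (S r)"
      and "0 < \<gamma>"
    obtain r where "measure F (S r) < \<gamma>"
      using order_tendstoD(2)[OF measure_small_E_D_tendsto_0 \<open>0 < \<gamma>\<close>]
      by (auto simp: S_def eventually_sequentially)
    from order_tendstoD(2)[OF lim[rule_format, of r] this] eventually_gt_at_top[of 0]
    have "eventually (\<lambda>n. real (card {i\<in>{1..n}. X i \<omega> \<in> S r}) < \<gamma> * real n) sequentially"
    proof eventually_elim
      case (elim n)
      moreover have "(\<Sum>i\<in>{1..n}. indicator (S r) (X i \<omega>) :: real) = real (card {i\<in>{1..n}. X i \<omega> \<in> S r})"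
        unfolding real_card_filter_eq_sum[OF finite_atLeastAtMost]
        by (intro sum.cong) (auto simp: indicator_def)
      ultimately show ?case by (simp add: field_simps)
    qed
    then show "\<exists>\<epsilon>>0. eventually (\<lambda>n. real (card {i\<in>{1..n}. 0 < E_D F fc B (X i \<omega>)
        \<and> E_D F fc B (X i \<omega>) < \<epsilon>}) < \<gamma> * real n) sequentially"
      by (intro exI[of _ "1 / real (Suc r)"]) (simp add: S_def)
  qed
qed

lemma AE_isolated_if_E_D_zero:
  "AE \<omega> in M. \<forall>i j. i \<noteq> j \<longrightarrow> E_D F fc B (X i \<omega>) = 0 \<longrightarrow> h_D fc B (X i \<omega>) (X j \<omega>) = 0"
proof -
  have "AE \<omega> in M. E_D F fc B (X i \<omega>) = 0 \<longrightarrow> h_D fc B (X i \<omega>) (X j \<omega>) = 0" if "i \<noteq> j" for i j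
  proof -
    interpret F: prob_space F by (rule prob_space_F)
    interpret FF: pair_prob_space F F ..
    define g where "g = (\<lambda>(x, y). indicator {x. E_D F fc B x = 0} x * h_D fc B x y :: real)"
    have g_measurable[measurable]: "g \<in> borel_measurable (borel \<Otimes>\<^sub>M borel)" unfolding g_def by measurable
    have g_bounded: "\<bar>g p\<bar> \<le> 1" for p by (auto simp: g_def indicator_def split: prod.split)
    have sets_eq: "sets (F \<Otimes>\<^sub>M F) = sets (borel \<Otimes>\<^sub>M borel)" by (intro sets_pair_measure_cong) simp_all
    have "integrable (F \<Otimes>\<^sub>M F) g"
      by (intro FF.integrable_const_bound[where B=1]) (simp_all add: g_bounded measurable_cong_sets[OF sets_eq refl])
    have integrable_g_X: "integrable M (\<lambda>\<omega>. g (X i \<omega>, X j \<omega>))"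
      by (rule integrable_const_bound[where B=1]) (simp_all add: g_bounded)
    have g_X_nonneg: "AE \<omega> in M. 0 \<le> g (X i \<omega>, X j \<omega>)" by (auto simp: g_def)
    have "expectation (\<lambda>\<omega>. g (X i \<omega>, X j \<omega>)) = (\<integral>p. g p \<partial>(F \<Otimes>\<^sub>M F))"
      by (subst distr_pair_X[OF that, symmetric], subst integral_distr) auto
    also have "\<dots> = (\<integral>x. (\<integral>y. g (x, y) \<partial>F) \<partial>F)"
      using FF.integral_fst'[OF \<open>integrable (F \<Otimes>\<^sub>M F) g\<close>] by simp
    also have "\<dots> = (\<integral>x. indicator {x. E_D F fc B x = 0} x * E_D F fc B x \<partial>F)"
      by (simp add: g_def E_D_def)
    also have "\<dots> = 0" by (intro integral_eq_zero_AE) (auto simp: indicator_def)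
    finally have "AE \<omega> in M. g (X i \<omega>, X j \<omega>) = 0"
      using integral_nonneg_eq_0_iff_AE[OF integrable_g_X g_X_nonneg] by simp
    then show ?thesis by (rule AE_mp) (auto simp: g_def indicator_def intro!: AE_I2)
  qed
  then show ?thesis by (simp only: AE_all_countable) auto
qed

lemma C_lim_eq: "C_lim F fc B w x = (if 0 < E_D F fc B x then E_T F fc B x / (E_D F fc B x)\<^sup>2 else w)"
  using E_D_nonneg[of x] by (auto simp: C_lim_def indicator_def)

lemma C_lim_measurable[measurable]: "C_lim F fc B w \<in> borel_measurable borel"
  unfolding C_lim_eq[abs_def] by measurable

lemma abs_C_lim_le: "\<bar>C_lim F fc B w x\<bar> \<le> 1 + \<bar>w\<bar>"
proof (cases "0 < E_D F fc B x")
  case True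
  then have "E_T F fc B x / (E_D F fc B x)\<^sup>2 \<le> 1" "0 \<le> E_T F fc B x / (E_D F fc B x)\<^sup>2"
    using E_T_le_E_D_square[of x] E_T_nonneg[of x] by simp_all
  moreover have "C_lim F fc B w x = E_T F fc B x / (E_D F fc B x)\<^sup>2" using True by (simp add: C_lim_eq)
  ultimately show ?thesis using abs_ge_zero[of w] by linarith
qed (simp add: C_lim_eq)

lemma AE_average_C_lim:
  "AE \<omega> in M. (\<lambda>n. (\<Sum>i\<in>{1..n}. C_lim F fc B w (X i \<omega>)) / real n)
    \<longlonglongrightarrow> expectation (\<lambda>\<omega>. C_lim F fc B w (X 1 \<omega>))"
proof -
  have "expectation (\<lambda>\<omega>. C_lim F fc B w (X 1 \<omega>)) = (\<integral>x. C_lim F fc B w x \<partial>F)"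
    by (subst distr_X[of 1, symmetric], subst integral_distr) auto
  moreover have "AE \<omega> in M. (\<lambda>n. (\<Sum>i\<in>{1..n}. C_lim F fc B w (X i \<omega>)) / real n) \<longlonglongrightarrow> (\<integral>x. C_lim F fc B w x \<partial>F)"
  proof (rule AE_average_tendsto_integral[of _ "-(1 + \<bar>w\<bar>)" "1 + \<bar>w\<bar>"])
    show "C_lim F fc B w x \<in> {-(1 + \<bar>w\<bar>)..1 + \<bar>w\<bar>}" for x
      using abs_C_lim_le[of w x] unfolding atLeastAtMost_iff abs_le_iff by linarith
  qed auto
  ultimately show ?thesis by simp
qed

lemma clustering_sequence_sample:
  assumes isolated: "\<And>i j. i \<noteq> j \<Longrightarrow> E_D F fc B (x i) = 0 \<Longrightarrow> h_D fc B (x i) (x j) = 0"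
  shows "clustering_sequence (degree_n fc B x) (triangles_n fc B x) (local_clust fc B w x)
    (\<lambda>i. E_D F fc B (x i)) (\<lambda>i. E_T F fc B (x i)) (\<lambda>i. C_lim F fc B w (x i)) (2 + 2 * \<bar>w\<bar>)"
proof
  fix n i assume "i \<in> {1..n}" and "E_D F fc B (x i) = 0"
  then have "real (degree_n fc B x n i) = 0"
    unfolding degree_n_eq_sum using isolated by (intro sum.neutral) auto
  then show "local_clust fc B w x n i = C_lim F fc B w (x i)"
    using \<open>E_D F fc B (x i) = 0\<close> by (simp add: local_clust_isolated C_lim_eq)
next
  show "\<bar>local_clust fc B w x n i - C_lim F fc B w (x i)\<bar> \<le> 2 + 2 * \<bar>w\<bar>" for n i
    using abs_local_clust_le[of fc B w x n i] abs_C_lim_le[of w "x i"] by linarith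
qed (auto simp: degree_n_mono triangles_n_mono E_D_nonneg E_D_le_1 E_T_nonneg E_T_le_E_D_square
    local_clust_eq_ratio C_lim_eq)

end

theorem theorem3:
  fixes M :: "'s measure" and X :: "nat \<Rightarrow> 's \<Rightarrow> real" and F :: "real measure"
    and fc :: "real \<Rightarrow> real \<Rightarrow> real" and B :: "real set" and w :: real
  assumes "prob_space M"
    and "\<And>i. X i \<in> borel_measurable M"
    and "prob_space.indep_vars M (\<lambda>_. borel) X UNIV"
    and "\<And>i. distr M borel (X i) = F"
    and "(\<lambda>(x, y). fc x y) \<in> borel_measurable (borel \<Otimes>\<^sub>M borel)"
    and "\<And>x y. fc x y = fc y x"
    and "B \<in> sets borel"
  shows "AE \<omega> in M. (\<lambda>n. global_clust fc B w (\<lambda>i. X i \<omega>) n)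
           \<longlonglongrightarrow> prob_space.expectation M (\<lambda>\<omega>. C_lim F fc B w (X 1 \<omega>))"
proof -
  interpret clustering_model M X F fc B
    using assms by (simp add: clustering_model_def clustering_model_axioms_def)
  from AE_average_C_lim[of w] AE_few_small_E_D AE_few_deviant AE_isolated_if_E_D_zero show ?thesis
  proof eventually_elim
    case (elim \<omega>)
    interpret clustering_sequence "degree_n fc B (\<lambda>i. X i \<omega>)" "triangles_n fc B (\<lambda>i. X i \<omega>)"
        "local_clust fc B w (\<lambda>i. X i \<omega>)" "\<lambda>i. E_D F fc B (X i \<omega>)" "\<lambda>i. E_T F fc B (X i \<omega>)"
        "\<lambda>i. C_lim F fc B w (X i \<omega>)" "2 + 2 * \<bar>w\<bar>"
      by (rule clustering_sequence_sample) (use elim(4) in blast)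
    have "(\<lambda>n. (\<Sum>i\<in>{1..n}. local_clust fc B w (\<lambda>i. X i \<omega>) n i) / real n)
        \<longlonglongrightarrow> expectation (\<lambda>\<omega>. C_lim F fc B w (X 1 \<omega>))"
      by (rule average_C_tendsto) (use elim(1-3) in auto)
    then show ?case by (simp add: global_clust_def)
  qed
qed

end
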